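(* Let $n\ge2$, $\mathcal{L}_n=\{(i,j)\in[n]^2:i>j\}$, $\bar n=n(n-1)/2$, observations $Y=(Y_{i,j})\in\{0,1\}^{\mathcal{L}_n}$ with distribution $P^{(\bar n)}_\Omega=\bigotimes_{(i,j)}\mathrm{Bern}(\Omega_{i,j})$, $\Omega\in[0,1]^{\mathcal{L}_n}$. Let $\Lambda^\star_{\bar n}\subset[0,1]^{\mathcal{L}_n}$ for each $n$, and let $\mathcal{M}_{\bar n}\subset[n]$. Then the adaptive variational quasi-posterior $\widehat\Xi^\natural_{\bar n}$ defined below satisfies, for any sequence $A_n\to\infty$, $$\sup_{\Omega^\star\in\Lambda^\star_{\bar n}}P^{(\bar n)}_{\Omega^\star}\Big[\widehat\Xi^\natural_{\bar n}\big(d_{\bar n,2}(T(U,Z),\Omega^\star)\ge A_n\epsilon_n(\Lambda^\star_{\bar n})\big)\Big]\to0,$$ where $$\epsilon_n(\Lambda^\star_{\bar n}):=\inf_{m\in\mathcal{M}_{\bar n}}\Big\{\sup_{\Omega^*\in\Lambda^\star_{\bar n}}\inf_{(U,Z)\in\Theta_{\bar n,m}}d_{\bar n,2}(T(U,Z),\Omega^* )+\sqrt{\tfrac{m^2}{n^2}\log n+\tfrac{\log m}{n}}\Big\}.$$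
   Context: $d_{\bar n,2}(\Omega_0,\Omega_1)=(\frac{2}{n(n-1)}\sum_{(i,j)\in\mathcal{L}_n}(\Omega_{0,i,j}-\Omega_{1,i,j})^2)^{1/2}$. Stochastic block model: $\mathcal{S}^m=\{U\in[0,1]^{m\times m}:U=U^\top\}$, $\mathcal{Z}_{n,m}=\{Z=(z_1,\dots,z_n)^\top\in\{0,1\}^{n\times m}:|z_i|_1=1\}$, $\Theta_{\bar n,m}=\mathcal{S}^m\times\mathcal{Z}_{n,m}$, $T(U,Z)=(z_i^\top Uz_j)_{(i,j)\in\mathcal{L}_n}$. Gaussian quasi-likelihood $q^\natural(\Omega,Y)=\prod_{(i,j)\in\mathcal{L}_n}e^{-(Y_{i,j}-\Omega_{i,j})^2}$. Prior $\Pi_{\bar n}=\sum_{m\in\mathcal{M}_{\bar n}}\alpha_{\bar n,m}\Pi_{\bar n,m}$ with $\Pi_{\bar n,m}=\bigotimes_{k\le h}\mathrm{Unif}(0,1)$ on the entries $U_{k,h}$, $k\le h$, times $\bigotimes_{i=1}^n\mathrm{Cat}(m^{-1}\mathbf 1_m)$ on the rows $z_i$, and $\alpha_{\bar n,m}\propto e^{-b_0(m^2\log n+n\log m)}$, $b_0>0$. Variational family $\mathbb{V}_{\bar n,m}=\{\bigotimes_{k\le h}\mathrm{Unif}(\psi_{1,k,h},\psi_{2,k,h})\otimes\bigotimes_{i}\mathrm{Cat}(\nu_i):0\le\psi_{1,k,h}\le\psi_{2,k,h}\le1,\ \nu_i\in\Delta_m\}$. Variational quasi-posterior $\widehat\Xi^\natural_{\bar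 n}=\sum_m\widehat\gamma_{\bar n,m}\widehat\Xi_{\bar n,m}$ with $\widehat\Xi_{\bar n,m}\in\operatorname{argmin}_{\Xi\in\mathbb{V}_{\bar n,m}}\mathcal{E}(\Xi,\Pi_{\bar n,m})$, $\mathcal{E}(\Xi,\Pi)=-\int\log q^\natural(T(U,Z),Y)d\Xi+\mathrm{KL}(\Xi,\Pi)$, and $\widehat\gamma_{\bar n,m}\propto\alpha_{\bar n,m}e^{-\mathcal{E}(\widehat\Xi_{\bar n,m},\Pi_{\bar n,m})}$. *)

theory Defs
  imports "HOL-Probability.Probability"
begin

(* Index set L_n = {(i,j) : i > j}, 0-based: nodes are 0..n-1 *)
definition Lset :: "nat \<Rightarrow> (nat \<times> nat) set" where
  "Lset n = {(i,j). j < i \<and> i < n}"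

(* Free entries U_{k,h}, k \<le> h, of a symmetric m x m matrix (0-based) *)
definition Iset :: "nat \<Rightarrow> (nat \<times> nat) set" where
  "Iset m = {(k,h). k \<le> h \<and> h < m}"

definition Uent :: "(nat \<times> nat \<Rightarrow> real) \<Rightarrow> nat \<Rightarrow> nat \<Rightarrow> real" where
  "Uent u k h = (if k \<le> h then u (k,h) else u (h,k))"

(* T(U,Z) = (z_i^T U z_j); Z is encoded by its label map: z_i = e_{z i} *)
definition Tmat :: "(nat \<times> nat \<Rightarrow> real) \<Rightarrow> (nat \<Rightarrow> nat) \<Rightarrow> nat \<times> nat \<Rightarrow> real" where
  "Tmat u z = (\<lambda>(i,j). Uent u (z i) (z j))"

definition dist2 :: "nat \<Rightarrow> (nat \<times> nat \<Rightarrow> real) \<Rightarrow> (nat \<times> nat \<Rightarrow> real) \<Rightarrow> real" where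
  "dist2 n O0 O1 = sqrt (2 / (real n * (real n - 1)) * (\<Sum>p\<in>Lset n. (O0 p - O1 p)^2))"

definition Theta :: "nat \<Rightarrow> nat \<Rightarrow> ((nat \<times> nat \<Rightarrow> real) \<times> (nat \<Rightarrow> nat)) set" where
  "Theta n m = {(u,z). (\<forall>p\<in>Iset m. 0 \<le> u p \<and> u p \<le> 1) \<and> (\<forall>i<n. z i < m)}"

definition qlik :: "nat \<Rightarrow> (nat \<times> nat \<Rightarrow> real) \<Rightarrow> (nat \<times> nat \<Rightarrow> bool) \<Rightarrow> real" where
  "qlik n Om Y = (\<Prod>p\<in>Lset n. exp (- ((of_bool (Y p) - Om p)^2)))"

definition Umeas :: "nat \<Rightarrow> (nat \<times> nat \<Rightarrow> real) \<Rightarrow> (nat \<times> nat \<Rightarrow> real) \<Rightarrow> (nat \<times> nat \<Rightarrow> real) measure" where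
  "Umeas m psi1 psi2 = PiM (Iset m) (\<lambda>p. uniform_measure lborel {psi1 p .. psi2 p})"

definition Zmeas :: "nat \<Rightarrow> (nat \<Rightarrow> nat pmf) \<Rightarrow> (nat \<Rightarrow> nat) measure" where
  "Zmeas n nu = PiM {..<n} (\<lambda>i. measure_pmf (nu i))"

definition Vmeas :: "nat \<Rightarrow> nat \<Rightarrow> (nat \<times> nat \<Rightarrow> real) \<times> (nat \<times> nat \<Rightarrow> real) \<times> (nat \<Rightarrow> nat pmf)
     \<Rightarrow> ((nat \<times> nat \<Rightarrow> real) \<times> (nat \<Rightarrow> nat)) measure" where
  "Vmeas n m par = (case par of (psi1, psi2, nu) \<Rightarrow> Umeas m psi1 psi2 \<Otimes>\<^sub>M Zmeas n nu)"

definition Vpar :: "nat \<Rightarrow> nat \<Rightarrow> ((nat \<times> nat \<Rightarrow> real) \<times> (nat \<times> nat \<Rightarrow> real) \<times> (nat \<Rightarrow> nat pmf)) set" where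
  "Vpar n m = {(psi1, psi2, nu). (\<forall>p\<in>Iset m. 0 \<le> psi1 p \<and> psi1 p < psi2 p \<and> psi2 p \<le> 1)
                                 \<and> (\<forall>i<n. set_pmf (nu i) \<subseteq> {..<m})}"

definition Prior :: "nat \<Rightarrow> nat \<Rightarrow> ((nat \<times> nat \<Rightarrow> real) \<times> (nat \<Rightarrow> nat)) measure" where
  "Prior n m = Umeas m (\<lambda>_. 0) (\<lambda>_. 1) \<Otimes>\<^sub>M Zmeas n (\<lambda>_. pmf_of_set {..<m})"

(* Objective E(Xi, Pi_{\bar n,m}) = - int log q dXi + KL(Xi, Pi);
   KL_divergence b M N is KL(N || M) in the library. *)
definition Energy :: "nat \<Rightarrow> nat \<Rightarrow> (nat \<times> nat \<Rightarrow> bool) \<Rightarrow> ((nat \<times> nat \<Rightarrow> real) \<times> (nat \<Rightarrow> nat)) measure \<Rightarrow> real" where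
  "Energy n m Y Xi = (\<integral>x. - ln (qlik n (Tmat (fst x) (snd x)) Y) \<partial>Xi) + KL_divergence (exp 1) (Prior n m) Xi"

definition alpha :: "real \<Rightarrow> nat \<Rightarrow> nat set \<Rightarrow> nat \<Rightarrow> real" where
  "alpha b0 n M m = exp (- b0 * (real m ^ 2 * ln (real n) + real n * ln (real m)))
       / (\<Sum>m'\<in>M. exp (- b0 * (real m' ^ 2 * ln (real n) + real n * ln (real m'))))"

(* Weights gamma_{\bar n,m}, given the chosen minimisers sel m *)
definition gamma :: "real \<Rightarrow> nat \<Rightarrow> nat set \<Rightarrow> (nat \<times> nat \<Rightarrow> bool)
     \<Rightarrow> (nat \<Rightarrow> (nat \<times> nat \<Rightarrow> real) \<times> (nat \<times> nat \<Rightarrow> real) \<times> (nat \<Rightarrow> nat pmf)) \<Rightarrow> nat \<Rightarrow> real" where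
  "gamma b0 n M Y sel m = alpha b0 n M m * exp (- Energy n m Y (Vmeas n m (sel m)))
       / (\<Sum>m'\<in>M. alpha b0 n M m' * exp (- Energy n m' Y (Vmeas n m' (sel m'))))"

(* Mass that the mixture quasi-posterior sum_m gamma_m Xi_m gives to the event S *)
definition post_prob :: "real \<Rightarrow> nat \<Rightarrow> nat set \<Rightarrow> (nat \<times> nat \<Rightarrow> bool)
     \<Rightarrow> (nat \<Rightarrow> (nat \<times> nat \<Rightarrow> real) \<times> (nat \<times> nat \<Rightarrow> real) \<times> (nat \<Rightarrow> nat pmf))
     \<Rightarrow> ((nat \<times> nat \<Rightarrow> real) \<Rightarrow> (nat \<Rightarrow> nat) \<Rightarrow> bool) \<Rightarrow> real" where
  "post_prob b0 n M Y sel S = (\<Sum>m\<in>M. gamma b0 n M Y sel m *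
       measure (Vmeas n m (sel m)) {x \<in> space (Vmeas n m (sel m)). S (fst x) (snd x)})"

definition Pdata :: "nat \<Rightarrow> (nat \<times> nat \<Rightarrow> real) \<Rightarrow> (nat \<times> nat \<Rightarrow> bool) pmf" where
  "Pdata n Om = Pi_pmf (Lset n) False (\<lambda>p. bernoulli_pmf (Om p))"

definition eps_rate :: "nat \<Rightarrow> (nat \<times> nat \<Rightarrow> real) set \<Rightarrow> nat set \<Rightarrow> real" where
  "eps_rate n Lam M = Inf ((\<lambda>m. Sup ((\<lambda>Om. Inf ((\<lambda>(u,z). dist2 n (Tmat u z) Om) ` Theta n m)) ` Lam)
        + sqrt (real m ^ 2 / real n ^ 2 * ln (real n) + ln (real m) / real n)) ` M)"

end

theory Submission
  imports Defs
begin

(*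
  Fix the truth Om and write S for the squared distance to Om and L_Y for the negative log
  quasi-likelihood.  In each model, the Donsker-Varadhan inequality applied to the exponent
  h = S/2 - (L_Y - L_Y(Om)) bounds the mean of S/2 under any member of the variational family by
  its energy, minus L_Y(Om), plus ln of the prior mean of exp h.  Gibbs' inequality carries this
  over to the mixture quasi-posterior at the price of -ln alpha_m for a single model m, and
  minimality of the variational solutions lets us compare with an explicit member: uniform boxes
  of width 1/n around a near-optimal (U,Z) with point masses at its labels, whose KL divergence to
  the prior is at most m^2 log n + n log m.  Under the data, exp h has mean at most 1 by Hoeffding's
  lemma for Bernoulli variables and L_Y - L_Y(Om) has mean S, so Markov's inequality bounds the
  expected posterior mass of {d >= A eps} by a constant times (d(T(U,Z), Om) + rate)^2 / (A eps)^2,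
  which is O(1/A^2).
*)

section \<open>Bernoulli moment bounds\<close>

lemma bernoulli_centered_mgf_le:
  fixes q l :: real
  assumes q: "0 \<le> q" "q \<le> 1"
  shows "q * exp (l * (1 - q)) + (1 - q) * exp (- l * q) \<le> exp (l^2 / 8)"
proof -
  have nonneg_case: "q * exp (l * (1 - q)) + (1 - q) * exp (- l * q) \<le> exp (l^2 / 8)"
    if "0 \<le> q" "q \<le> 1" "0 \<le> l" for q l :: real
  proof -
    have pos: "0 < 1 + q * (exp l - 1)"
      using that by (smt (verit) mult_nonneg_nonneg one_le_exp_iff)
    have "ln (1 + q * (exp l - 1)) \<le> l * q + l^2 / 8"
      using Hoeffdings_lemma_aux[of l q] that by simp
    then have "1 + q * (exp l - 1) \<le> exp (l * q + l^2 / 8)"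
      using pos by (metis exp_le_cancel_iff exp_ln)
    then have "exp (- l * q) * (1 + q * (exp l - 1)) \<le> exp (- l * q) * exp (l * q + l^2 / 8)"
      by (intro mult_left_mono) auto
    also have "\<dots> = exp (l^2 / 8)"
      by (simp flip: exp_add)
    also have "exp (- l * q) * (1 + q * (exp l - 1)) = q * exp (l * (1 - q)) + (1 - q) * exp (- l * q)"
      by (simp add: algebra_simps flip: exp_add)
    finally show ?thesis .
  qed
  show ?thesis
  proof (cases "0 \<le> l")
    case False
    then show ?thesis
      using nonneg_case[of "1 - q" "- l"] q by (simp add: algebra_simps)
  qed (use nonneg_case q in auto)
qed

lemma expectation_bernoulli_exp_excess_loss_le_1:
  fixes q t :: real
  assumes q: "0 \<le> q" "q \<le> 1"
  shows "measure_pmf.expectation (bernoulli_pmf q)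
           (\<lambda>y. exp ((t - q)^2 / 2 - (of_bool y - t)^2 + (of_bool y - q)^2)) \<le> 1"
proof -
  define d where "d = t - q"
  have one: "(t - q)^2 / 2 - (1 - t)^2 + (1 - q)^2 = - (d^2 / 2) + 2 * d * (1 - q)"
    and zero: "(t - q)^2 / 2 - (0 - t)^2 + (0 - q)^2 = - (d^2 / 2) + - (2 * d) * q"
    by (simp_all add: d_def power2_eq_square field_simps)
  have "measure_pmf.expectation (bernoulli_pmf q)
          (\<lambda>y. exp ((t - q)^2 / 2 - (of_bool y - t)^2 + (of_bool y - q)^2))
        = q * exp ((t - q)^2 / 2 - (1 - t)^2 + (1 - q)^2)
          + (1 - q) * exp ((t - q)^2 / 2 - (0 - t)^2 + (0 - q)^2)"
    using q by simp
  also have "\<dots> = exp (- (d^2 / 2)) * (q * exp (2 * d * (1 - q)) + (1 - q) * exp (- (2 * d) * q))"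
    unfolding one zero exp_add by (simp add: algebra_simps)
  also have "\<dots> \<le> exp (- (d^2 / 2)) * exp ((2 * d)^2 / 8)"
    using q by (intro mult_left_mono bernoulli_centered_mgf_le) auto
  also have "\<dots> = 1"
    by (simp add: power2_eq_square flip: exp_add)
  finally show ?thesis .
qed

lemma expectation_bernoulli_excess_loss:
  fixes q t :: real
  assumes "0 \<le> q" "q \<le> 1"
  shows "measure_pmf.expectation (bernoulli_pmf q) (\<lambda>y. (of_bool y - t)^2 - (of_bool y - q)^2)
           = (t - q)^2"
  using assms by (simp add: power2_eq_square algebra_simps)

section \<open>Densities of product measures\<close>

lemma PiM_density_sigma_finite:
  fixes f :: "'i \<Rightarrow> 'a \<Rightarrow> ennreal"
  assumes I: "finite I"
    and sf_M: "\<And>i. sigma_finite_measure (M i)"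
    and sf_D: "\<And>i. sigma_finite_measure (density (M i) (f i))"
    and f [measurable]: "\<And>i. f i \<in> borel_measurable (M i)"
  shows "PiM I (\<lambda>i. density (M i) (f i)) = density (PiM I M) (\<lambda>x. \<Prod>i\<in>I. f i (x i))"
proof -
  interpret PM: product_sigma_finite M
    by (simp add: product_sigma_finite_def sf_M)
  interpret PD: product_sigma_finite "\<lambda>i. density (M i) (f i)"
    by (simp add: product_sigma_finite_def sf_D)
  have [measurable]: "(\<lambda>x. \<Prod>i\<in>I. f i (x i)) \<in> borel_measurable (PiM I M)"
    using I by measurable
  show ?thesis
  proof (rule PD.PiM_eqI[symmetric])
    show "sets (density (PiM I M) (\<lambda>x. \<Prod>i\<in>I. f i (x i))) = sets (PiM I (\<lambda>i. density (M i) (f i)))"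
      unfolding sets_density by (intro sets_PiM_cong) simp_all
  next
    fix A assume "\<And>i. i \<in> I \<Longrightarrow> A i \<in> sets (density (M i) (f i))"
    then have A: "\<And>i. i \<in> I \<Longrightarrow> A i \<in> sets (M i)" by simp
    have "PiE I A \<in> sets (PiM I M)"
      using A I by (intro sets_PiM_I_finite) auto
    then have "emeasure (density (PiM I M) (\<lambda>x. \<Prod>i\<in>I. f i (x i))) (PiE I A)
       = (\<integral>\<^sup>+ x. (\<Prod>i\<in>I. f i (x i)) * indicator (PiE I A) x \<partial>PiM I M)"
      by (simp add: emeasure_density)
    also have "\<dots> = (\<integral>\<^sup>+ x. (\<Prod>i\<in>I. f i (x i) * indicator (A i) (x i)) \<partial>PiM I M)"
    proof (intro nn_integral_cong)
      fix x assume "x \<in> space (PiM I M)"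
      then have "indicator (PiE I A) x = (\<Prod>i\<in>I. indicator (A i) (x i) :: ennreal)"
        using I by (auto simp: space_PiM indicator_def PiE_iff)
      then show "(\<Prod>i\<in>I. f i (x i)) * indicator (PiE I A) x
                 = (\<Prod>i\<in>I. f i (x i) * indicator (A i) (x i))"
        by (simp add: prod.distrib)
    qed
    also have "\<dots> = (\<Prod>i\<in>I. \<integral>\<^sup>+ y. f i y * indicator (A i) y \<partial>M i)"
      using I A by (intro PM.product_nn_integral_prod) auto
    also have "\<dots> = (\<Prod>i\<in>I. emeasure (density (M i) (f i)) (A i))"
      using A by (intro prod.cong refl) (simp add: emeasure_density)
    finally show "emeasure (density (PiM I M) (\<lambda>x. \<Prod>i\<in>I. f i (x i))) (PiE I A)
                  = (\<Prod>i\<in>I. emeasure (density (M i) (f i)) (A i))" .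
  qed fact
qed

lemma PiM_density:
  fixes f :: "'i \<Rightarrow> 'a \<Rightarrow> ennreal"
  assumes I: "finite I"
    and prob_M: "\<And>i. i \<in> I \<Longrightarrow> prob_space (M i)"
    and prob_D: "\<And>i. i \<in> I \<Longrightarrow> prob_space (density (M i) (f i))"
    and f: "\<And>i. i \<in> I \<Longrightarrow> f i \<in> borel_measurable (M i)"
  shows "PiM I (\<lambda>i. density (M i) (f i)) = density (PiM I M) (\<lambda>x. \<Prod>i\<in>I. f i (x i))"
proof -
  \<comment> \<open>Factors outside \<open>I\<close> do not matter; make them sigma-finite.\<close>
  define M' where "M' = (\<lambda>i. if i \<in> I then M i else return (count_space UNIV) undefined)"
  define f' where "f' = (\<lambda>i. if i \<in> I then f i else (\<lambda>_. 1))"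
  have "PiM I (\<lambda>i. density (M' i) (f' i)) = density (PiM I M') (\<lambda>x. \<Prod>i\<in>I. f' i (x i))"
  proof (intro PiM_density_sigma_finite I)
    show "sigma_finite_measure (M' i)" for i
      using prob_M by (auto simp: M'_def prob_space_return intro: prob_space_imp_sigma_finite)
    show "sigma_finite_measure (density (M' i) (f' i))" for i
      using prob_D by (auto simp: M'_def f'_def prob_space_return density_1
                            intro: prob_space_imp_sigma_finite)
    show "f' i \<in> borel_measurable (M' i)" for i
      using f by (auto simp: M'_def f'_def)
  qed
  moreover have "PiM I (\<lambda>i. density (M' i) (f' i)) = PiM I (\<lambda>i. density (M i) (f i))"
    by (intro PiM_cong) (auto simp: M'_def f'_def)
  moreover have "PiM I M' = PiM I M"
    by (intro PiM_cong) (auto simp: M'_def)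
  moreover have "(\<lambda>x. \<Prod>i\<in>I. f' i (x i)) = (\<lambda>x. \<Prod>i\<in>I. f i (x i))"
    by (auto simp: f'_def intro!: prod.cong)
  ultimately show ?thesis by simp
qed

lemma uniform_measure_density_unit_interval:
  fixes a b :: real
  assumes ab: "0 \<le> a" "a < b" "b \<le> 1"
  shows "uniform_measure lborel {a..b}
         = density (uniform_measure lborel {0..1}) (\<lambda>x. ennreal (indicator {a..b} x / (b - a)))"
proof -
  have "density (uniform_measure lborel {0..1}) (\<lambda>x. ennreal (indicator {a..b} x / (b - a)))
      = density lborel (\<lambda>x. indicator {0..1::real} x / emeasure lborel {0..1::real}
                              * ennreal (indicator {a..b} x / (b - a)))"
    unfolding uniform_measure_def by (subst density_density_eq) auto
  also have "\<dots> = density lborel (\<lambda>x. indicator {a..b} x / emeasure lborel {a..b})"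
  proof (intro density_cong AE_I2)
    fix x :: real
    show "indicator {0..1::real} x / emeasure lborel {0..1::real} * ennreal (indicator {a..b} x / (b - a))
          = indicator {a..b} x / emeasure lborel {a..b}"
      using ab by (cases "x \<in> {a..b}")
        (auto simp: indicator_def divide_ennreal ennreal_1[symmetric] simp del: ennreal_1, simp)
  qed auto
  finally show ?thesis
    by (simp add: uniform_measure_def)
qed

lemma measure_pmf_density_pmf_of_set:
  assumes S: "finite S" "S \<noteq> {}" and nu: "set_pmf nu \<subseteq> S"
  shows "measure_pmf nu
         = density (measure_pmf (pmf_of_set S)) (\<lambda>k. ennreal (real (card S) * pmf nu k))"
proof -
  have "density (measure_pmf (pmf_of_set S)) (\<lambda>k. ennreal (real (card S) * pmf nu k))
      = density (count_space UNIV)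
          (\<lambda>k. ennreal (pmf (pmf_of_set S) k) * ennreal (real (card S) * pmf nu k))"
    unfolding measure_pmf_eq_density[of "pmf_of_set S"] by (subst density_density_eq) auto
  also have "\<dots> = density (count_space UNIV) (\<lambda>k. ennreal (pmf nu k))"
  proof (intro density_cong AE_I2)
    fix k
    show "ennreal (pmf (pmf_of_set S) k) * ennreal (real (card S) * pmf nu k) = ennreal (pmf nu k)"
    proof (cases "k \<in> S")
      case True
      then show ?thesis
        using S by (simp add: ennreal_mult[symmetric] card_gt_0_iff)
    next
      case False
      then have "pmf nu k = 0"
        using nu by (auto simp: set_pmf_eq)
      then show ?thesis by simp
    qed
  qed auto
  finally show ?thesis
    by (simp add: measure_pmf_eq_density)
qed

section \<open>The Donsker--Varadhan and Gibbs inequalities\<close>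

lemma density_integral_eq_1:
  fixes F :: "'a \<Rightarrow> real"
  assumes [measurable]: "F \<in> borel_measurable M" and F_nonneg: "\<And>x. 0 \<le> F x"
    and "prob_space (density M (\<lambda>x. ennreal (F x)))"
  shows "integrable M F" and "(\<integral>x. F x \<partial>M) = 1"
proof -
  have "(\<integral>\<^sup>+x. ennreal (F x) \<partial>M) = ennreal 1"
    using prob_space.emeasure_space_1[OF assms(3)] by (simp add: emeasure_density)
  then have "integrable M F \<and> integral\<^sup>L M F = 1"
    using F_nonneg by (subst nn_integral_eq_integrable[symmetric]) auto
  then show "integrable M F" and "(\<integral>x. F x \<partial>M) = 1"
    by auto
qed

lemma abs_mult_ln_le:
  fixes y B :: real
  assumes y: "0 \<le> y" "y \<le> B"
  shows "\<bar>y * ln y\<bar> \<le> B * B + 1"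
proof (cases "y = 0")
  case False
  with y have y_pos: "0 < y" by simp
  have "y * ln y \<le> y * y"
    using ln_le_minus_one[OF y_pos] y_pos by (intro mult_left_mono) auto
  moreover have "y * y \<le> B * B"
    using y by (intro mult_mono) auto
  moreover have "- (y * ln y) \<le> 1"
  proof -
    have "y * (- ln y) \<le> y * (1 / y)"
      using ln_le_minus_one[of "1 / y"] y_pos by (intro mult_left_mono) (auto simp: ln_div)
    then show ?thesis
      using y_pos by simp
  qed
  moreover have "0 \<le> B * B"
    by simp
  ultimately show ?thesis
    unfolding abs_le_iff by linarith
qed simp

text \<open>Fenchel--Young for the conjugate pair \<open>y ln y - y\<close> and \<open>exp\<close>.\<close>

lemma Fenchel_Young_entropy:
  fixes y h X :: real
  assumes y: "0 \<le> y" and X: "0 < X"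
  shows "y * h - y * ln y \<le> exp h / X + y * (ln X - 1)"
proof (cases "y = 0")
  case False
  with y have y_pos: "0 < y" by simp
  have "ln (exp h / (y * X)) \<le> exp h / (y * X) - 1"
    using y_pos X by (intro ln_le_minus_one) simp
  then have "h - ln y - ln X \<le> exp h / (y * X) - 1"
    using y_pos X by (simp add: ln_div ln_mult)
  then have "y * (h - ln y - ln X) \<le> y * (exp h / (y * X) - 1)"
    using y_pos by (intro mult_left_mono) auto
  then show ?thesis
    using y_pos X by (simp add: algebra_simps)
qed (use X in simp)

context prob_space
begin

lemma integrable_exp_AE_bounded:
  fixes h :: "'a \<Rightarrow> real"
  assumes [measurable]: "h \<in> borel_measurable M" and h: "AE x in M. \<bar>h x\<bar> \<le> C"
  shows "integrable M (\<lambda>x. exp (h x))"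
  by (rule integrable_const_bound[where B="exp C"]) (use h in \<open>auto elim!: eventually_mono\<close>)

lemma integral_exp_pos_AE_bounded:
  fixes h :: "'a \<Rightarrow> real"
  assumes [measurable]: "h \<in> borel_measurable M" and h: "AE x in M. \<bar>h x\<bar> \<le> C"
  shows "0 < (\<integral>x. exp (h x) \<partial>M)"
proof -
  have "exp (- C) = (\<integral>x. exp (- C) \<partial>M)"
    by (simp add: prob_space)
  also have "\<dots> \<le> (\<integral>x. exp (h x) \<partial>M)"
    by (rule integral_mono_AE)
       (use integrable_exp_AE_bounded[OF assms] h in \<open>auto elim!: eventually_mono\<close>)
  finally show ?thesis
    using exp_gt_zero[of "- C"] by linarith
qed

lemma Donsker_Varadhan_density:
  fixes F h :: "'a \<Rightarrow> real"
  assumes [measurable]: "F \<in> borel_measurable M" "h \<in> borel_measurable M"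
    and F_nonneg: "\<And>x. 0 \<le> F x" and F_le: "\<And>x. F x \<le> B"
    and dens: "prob_space (density M (\<lambda>x. ennreal (F x)))"
    and h: "AE x in M. \<bar>h x\<bar> \<le> C"
  shows "(\<integral>x. h x \<partial>density M (\<lambda>x. ennreal (F x)))
           \<le> KL_divergence (exp 1) M (density M (\<lambda>x. ennreal (F x))) + ln (\<integral>x. exp (h x) \<partial>M)"
proof -
  define X where "X = (\<integral>x. exp (h x) \<partial>M)"
  have X_pos: "0 < X"
    unfolding X_def using h by (rule integral_exp_pos_AE_bounded[rotated]) simp
  have int_exp: "integrable M (\<lambda>x. exp (h x))"
    using h by (rule integrable_exp_AE_bounded[rotated]) simp
  have int_F: "integrable M F" and F_1: "(\<integral>x. F x \<partial>M) = 1"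
    using density_integral_eq_1[of F M] F_nonneg dens by auto
  have B_nonneg: "0 \<le> B"
    using F_nonneg F_le by (meson order.trans)
  have int_Fh: "integrable M (\<lambda>x. F x * h x)"
    by (rule integrable_const_bound[where B="B * C"])
       (use h F_nonneg F_le B_nonneg in \<open>auto elim!: eventually_mono simp: abs_mult intro!: mult_mono\<close>)
  have int_Fln: "integrable M (\<lambda>x. F x * ln (F x))"
    by (rule integrable_const_bound[where B="B * B + 1"]) (use abs_mult_ln_le F_nonneg F_le in auto)
  have "KL_divergence (exp 1) M (density M (\<lambda>x. ennreal (F x))) = (\<integral>x. F x * ln (F x) \<partial>M)"
    using KL_density[of "exp 1" F] F_nonneg by (simp add: log_def)
  moreover have "(\<integral>x. h x \<partial>density M (\<lambda>x. ennreal (F x))) = (\<integral>x. F x * h x \<partial>M)"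
    using F_nonneg by (subst integral_density) auto
  moreover have "(\<integral>x. F x * h x \<partial>M) - (\<integral>x. F x * ln (F x) \<partial>M)
                 = (\<integral>x. F x * h x - F x * ln (F x) \<partial>M)"
    using int_Fh int_Fln by simp
  moreover have "\<dots> \<le> (\<integral>x. exp (h x) / X + F x * (ln X - 1) \<partial>M)"
    by (rule integral_mono)
       (use int_Fh int_Fln int_exp int_F Fenchel_Young_entropy F_nonneg X_pos in auto)
  moreover have "\<dots> = ln X"
    using int_exp int_F F_1 X_pos by (simp add: X_def[symmetric] mult.commute)
  ultimately show ?thesis
    by (simp add: X_def)
qed

end

lemma Gibbs_sum_ln_le:
  fixes g a :: "'i \<Rightarrow> real"
  assumes fin: "finite I" and g: "\<And>i. i \<in> I \<Longrightarrow> 0 < g i" and g_sum: "(\<Sum>i\<in>I. g i) = 1"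
    and a: "\<And>i. i \<in> I \<Longrightarrow> 0 < a i"
  shows "(\<Sum>i\<in>I. g i * ln (a i / g i)) \<le> ln (\<Sum>i\<in>I. a i)"
proof -
  define S where "S = (\<Sum>i\<in>I. a i)"
  have "I \<noteq> {}"
    using g_sum by auto
  then have S_pos: "0 < S"
    unfolding S_def using fin a by (intro sum_pos) auto
  have "(\<Sum>i\<in>I. g i * ln (a i / g i)) - ln S = (\<Sum>i\<in>I. g i * ln (a i / (g i * S)))"
  proof -
    have "g i * ln (a i / (g i * S)) = g i * ln (a i / g i) - g i * ln S" if "i \<in> I" for i
      using g[OF that] a[OF that] S_pos by (simp add: ln_div ln_mult algebra_simps)
    then show ?thesis
      using g_sum by (simp add: sum_subtractf flip: sum_distrib_right)
  qed
  also have "\<dots> \<le> (\<Sum>i\<in>I. g i * (a i / (g i * S) - 1))"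
    using g a S_pos by (intro sum_mono mult_left_mono ln_le_minus_one) (auto intro: less_imp_le)
  also have "\<dots> = (\<Sum>i\<in>I. a i / S - g i)"
  proof (intro sum.cong refl)
    fix i assume "i \<in> I"
    then show "g i * (a i / (g i * S) - 1) = a i / S - g i"
      using g[of i] S_pos by (simp add: field_simps)
  qed
  also have "\<dots> = 0"
    using S_pos g_sum by (simp add: sum_subtractf S_def flip: sum_divide_distrib)
  finally show ?thesis
    by (simp add: S_def)
qed

lemma Gibbs_mixture_bound:
  fixes al E X D :: "'i \<Rightarrow> real"
  assumes fin: "finite I" and i0: "i0 \<in> I"
    and al: "\<And>i. i \<in> I \<Longrightarrow> 0 < al i" and X: "\<And>i. i \<in> I \<Longrightarrow> 0 < X i"
    and D: "\<And>i. i \<in> I \<Longrightarrow> D i \<le> E i - c + ln (X i)"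
  shows "(\<Sum>i\<in>I. al i * exp (- E i) / (\<Sum>j\<in>I. al j * exp (- E j)) * D i)
           \<le> E i0 - c - ln (al i0) + ln (\<Sum>i\<in>I. al i * X i)"
proof -
  define W where "W = (\<Sum>j\<in>I. al j * exp (- E j))"
  define g where "g i = al i * exp (- E i) / W" for i
  have W_ge: "al i0 * exp (- E i0) \<le> W"
    unfolding W_def using fin i0 al by (intro member_le_sum) (auto intro: less_imp_le)
  have W_pos: "0 < W"
    using W_ge al[OF i0] by (smt (verit) exp_gt_zero mult_pos_pos)
  have g_pos: "0 < g i" if "i \<in> I" for i
    using al[OF that] W_pos by (simp add: g_def)
  have g_sum: "(\<Sum>i\<in>I. g i) = 1"
    unfolding g_def using W_pos by (simp add: W_def flip: sum_divide_distrib)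
  have pointwise: "g i * D i \<le> g i * (- c - ln W) + g i * ln (al i * X i / g i)" if i: "i \<in> I" for i
  proof -
    have "E i = ln (al i) - ln (g i) - ln W"
      using al[OF i] W_pos by (simp add: g_def ln_div ln_mult)
    moreover have "ln (al i * X i / g i) = ln (al i) + ln (X i) - ln (g i)"
      using al[OF i] X[OF i] g_pos[OF i] by (simp add: ln_div ln_mult)
    ultimately have "D i \<le> (- c - ln W) + ln (al i * X i / g i)"
      using D[OF i] by linarith
    then show ?thesis
      using g_pos[OF i] by (simp add: distrib_left[symmetric] mult_left_mono)
  qed
  have "(\<Sum>i\<in>I. g i * D i) \<le> (\<Sum>i\<in>I. g i * (- c - ln W) + g i * ln (al i * X i / g i))"
    using pointwise by (rule sum_mono)
  also have "\<dots> = (- c - ln W) + (\<Sum>i\<in>I. g i * ln (al i * X i / g i))"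
    by (simp add: sum.distrib g_sum flip: sum_distrib_right)
  also have "(\<Sum>i\<in>I. g i * ln (al i * X i / g i)) \<le> ln (\<Sum>i\<in>I. al i * X i)"
    using fin g_pos g_sum al X by (intro Gibbs_sum_ln_le) auto
  finally have "(\<Sum>i\<in>I. g i * D i) \<le> - c - ln W + ln (\<Sum>i\<in>I. al i * X i)"
    by simp
  moreover have "ln (al i0 * exp (- E i0)) \<le> ln W"
    using W_ge al[OF i0] by (intro ln_mono) auto
  ultimately show ?thesis
    using al[OF i0] by (simp add: g_def W_def ln_mult)
qed

lemma expectation_ln_mixture_le_0:
  fixes X :: "'b \<Rightarrow> 'i \<Rightarrow> real"
  assumes fin: "finite I" "finite (set_pmf P)"
    and w: "\<And>i. i \<in> I \<Longrightarrow> 0 \<le> w i" "(\<Sum>i\<in>I. w i) = 1"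
    and X_pos: "\<And>Y i. i \<in> I \<Longrightarrow> 0 < X Y i"
    and X_mean: "\<And>i. i \<in> I \<Longrightarrow> measure_pmf.expectation P (\<lambda>Y. X Y i) \<le> 1"
  shows "measure_pmf.expectation P (\<lambda>Y. ln (\<Sum>i\<in>I. w i * X Y i)) \<le> 0"
proof -
  obtain i0 where i0: "i0 \<in> I" "0 < w i0"
    using w by (metis less_eq_real_def sum.neutral zero_neq_one)
  have pos: "0 < (\<Sum>i\<in>I. w i * X Y i)" for Y
  proof (rule sum_pos2[OF fin(1) i0(1)])
    show "0 < w i0 * X Y i0"
      using i0 X_pos by simp
    show "0 \<le> w i * X Y i" if "i \<in> I" for i
      using w(1)[OF that] X_pos[OF that, of Y] by simp
  qed
  have "measure_pmf.expectation P (\<lambda>Y. ln (\<Sum>i\<in>I. w i * X Y i))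
        \<le> measure_pmf.expectation P (\<lambda>Y. (\<Sum>i\<in>I. w i * X Y i) - 1)"
    using fin(2) pos by (intro integral_mono ln_le_minus_one integrable_measure_pmf_finite)
  also have "\<dots> = (\<Sum>i\<in>I. w i * measure_pmf.expectation P (\<lambda>Y. X Y i)) - 1"
    using fin(2) by (simp add: Bochner_Integration.integral_sum integrable_measure_pmf_finite
                              measure_pmf.prob_space)
  also have "\<dots> \<le> (\<Sum>i\<in>I. w i * 1) - 1"
    using w(1) X_mean by (intro diff_right_mono sum_mono mult_left_mono) auto
  finally show ?thesis
    using w(2) by simp
qed

section \<open>The prior and the variational family\<close>

lemma finite_Iset [simp]: "finite (Iset m)"
  by (rule finite_subset[of _ "{..<m} \<times> {..<m}"]) (auto simp: Iset_def)

lemma card_Iset_le: "card (Iset m) \<le> m^2"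
proof -
  have "card (Iset m) \<le> card ({..<m} \<times> {..<m})"
    by (intro card_mono) (auto simp: Iset_def)
  then show ?thesis
    by (simp add: card_cartesian_product power2_eq_square)
qed

lemma finite_Lset [simp]: "finite (Lset n)"
  by (rule finite_subset[of _ "{..<n} \<times> {..<n}"]) (auto simp: Lset_def)

lemma card_Lset_le: "card (Lset n) \<le> n^2"
proof -
  have "card (Lset n) \<le> card ({..<n} \<times> {..<n})"
    by (intro card_mono) (auto simp: Lset_def)
  then show ?thesis
    by (simp add: card_cartesian_product power2_eq_square)
qed

abbreviation Uprior :: "nat \<Rightarrow> (nat \<times> nat \<Rightarrow> real) measure" where
  "Uprior m \<equiv> Umeas m (\<lambda>_. 0) (\<lambda>_. 1)"

abbreviation Zprior :: "nat \<Rightarrow> nat \<Rightarrow> (nat \<Rightarrow> nat) measure" where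
  "Zprior n m \<equiv> Zmeas n (\<lambda>_. pmf_of_set {..<m})"

lemma prob_space_uniform_interval: "a < b \<Longrightarrow> prob_space (uniform_measure lborel {a..b::real})"
  by (intro prob_space_uniform_measure) auto

lemma prob_space_Umeas:
  "\<forall>p\<in>Iset m. psi1 p < psi2 p \<Longrightarrow> prob_space (Umeas m psi1 psi2)"
  unfolding Umeas_def by (intro prob_space_PiM prob_space_uniform_interval) auto

lemma prob_space_Zmeas: "prob_space (Zmeas n nu)"
  unfolding Zmeas_def by (intro prob_space_PiM prob_space_measure_pmf)

lemma prob_space_Prior: "prob_space (Prior n m)"
  unfolding Prior_def by (intro prob_space_pair prob_space_Umeas prob_space_Zmeas) auto

lemma prob_space_Vmeas: "par \<in> Vpar n m \<Longrightarrow> prob_space (Vmeas n m par)"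
  by (auto simp: Vpar_def Vmeas_def intro!: prob_space_pair prob_space_Umeas prob_space_Zmeas)

definition Udens :: "nat \<Rightarrow> (nat \<times> nat \<Rightarrow> real) \<Rightarrow> (nat \<times> nat \<Rightarrow> real) \<Rightarrow> (nat \<times> nat \<Rightarrow> real) \<Rightarrow> real"
  where "Udens m psi1 psi2 u = (\<Prod>p\<in>Iset m. indicator {psi1 p..psi2 p} (u p) / (psi2 p - psi1 p))"

definition Zdens :: "nat \<Rightarrow> nat \<Rightarrow> (nat \<Rightarrow> nat pmf) \<Rightarrow> (nat \<Rightarrow> nat) \<Rightarrow> real"
  where "Zdens n m nu z = (\<Prod>i<n. real m * pmf (nu i) (z i))"

definition Vdens :: "nat \<Rightarrow> nat \<Rightarrow> (nat \<times> nat \<Rightarrow> real) \<times> (nat \<times> nat \<Rightarrow> real) \<times> (nat \<Rightarrow> nat pmf)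
    \<Rightarrow> (nat \<times> nat \<Rightarrow> real) \<times> (nat \<Rightarrow> nat) \<Rightarrow> real"
  where "Vdens n m par x =
           (case par of (psi1, psi2, nu) \<Rightarrow> Udens m psi1 psi2 (fst x) * Zdens n m nu (snd x))"

lemma measurable_Udens [measurable]: "Udens m psi1 psi2 \<in> borel_measurable (Uprior m)"
  unfolding Udens_def Umeas_def by measurable

lemma measurable_Zdens [measurable]: "Zdens n m nu \<in> borel_measurable (Zprior n m)"
  unfolding Zdens_def Zmeas_def by measurable

lemma measurable_Vdens [measurable]: "Vdens n m par \<in> borel_measurable (Prior n m)"
  unfolding Vdens_def Prior_def by (cases par) auto

lemma Vdens_nonneg: "par \<in> Vpar n m \<Longrightarrow> 0 \<le> Vdens n m par x"
  by (cases par) (auto simp: Vpar_def Vdens_def Udens_def Zdens_def intro!: mult_nonneg_nonneg prod_nonneg)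

lemma Vdens_bounded:
  assumes "par \<in> Vpar n m"
  obtains B where "\<And>x. Vdens n m par x \<le> B"
proof -
  obtain psi1 psi2 nu where par: "par = (psi1, psi2, nu)"
    by (cases par) auto
  have psi: "\<forall>p\<in>Iset m. psi1 p < psi2 p"
    using assms by (auto simp: par Vpar_def)
  have "Udens m psi1 psi2 u \<le> (\<Prod>p\<in>Iset m. 1 / (psi2 p - psi1 p))" for u
    unfolding Udens_def using psi by (intro prod_mono) (auto simp: indicator_def divide_right_mono)
  moreover have "Zdens n m nu z \<le> (\<Prod>i<n. real m)" for z
    unfolding Zdens_def by (intro prod_mono) (auto simp: pmf_le_1 mult_left_le)
  moreover have "0 \<le> Zdens n m nu z" for z
    by (auto simp: Zdens_def intro!: prod_nonneg)
  moreover have "0 \<le> (\<Prod>p\<in>Iset m. 1 / (psi2 p - psi1 p))"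
    using psi by (auto intro!: prod_nonneg)
  ultimately have "Vdens n m par x \<le> (\<Prod>p\<in>Iset m. 1 / (psi2 p - psi1 p)) * (\<Prod>i<n. real m)" for x
    unfolding Vdens_def par by (auto intro!: mult_mono)
  then show ?thesis
    using that by blast
qed

lemma Umeas_eq_density:
  assumes psi: "\<forall>p\<in>Iset m. 0 \<le> psi1 p \<and> psi1 p < psi2 p \<and> psi2 p \<le> 1"
  shows "Umeas m psi1 psi2 = density (Uprior m) (\<lambda>u. ennreal (Udens m psi1 psi2 u))"
proof -
  have "Umeas m psi1 psi2 = PiM (Iset m) (\<lambda>p. density (uniform_measure lborel {0..1})
          (\<lambda>x. ennreal (indicator {psi1 p..psi2 p} x / (psi2 p - psi1 p))))"
    unfolding Umeas_def using psi by (intro PiM_cong refl uniform_measure_density_unit_interval) auto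
  also have "\<dots> = density (Uprior m) (\<lambda>u. \<Prod>p\<in>Iset m.
                     ennreal (indicator {psi1 p..psi2 p} (u p) / (psi2 p - psi1 p)))"
    unfolding Umeas_def using psi
    by (intro PiM_density)
       (auto simp: uniform_measure_density_unit_interval[symmetric] intro!: prob_space_uniform_interval)
  also have "\<dots> = density (Uprior m) (\<lambda>u. ennreal (Udens m psi1 psi2 u))"
    unfolding Udens_def using psi by (subst prod_ennreal) auto
  finally show ?thesis .
qed

lemma Zmeas_eq_density:
  assumes m: "0 < m" and nu: "\<forall>i<n. set_pmf (nu i) \<subseteq> {..<m}"
  shows "Zmeas n nu = density (Zprior n m) (\<lambda>z. ennreal (Zdens n m nu z))"
proof -
  have dens: "measure_pmf (nu i)
              = density (measure_pmf (pmf_of_set {..<m})) (\<lambda>k. ennreal (real m * pmf (nu i) k))"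
    if "i < n" for i
    using measure_pmf_density_pmf_of_set[of "{..<m}" "nu i"] nu m that by auto
  have "Zmeas n nu = PiM {..<n} (\<lambda>i. density (measure_pmf (pmf_of_set {..<m}))
          (\<lambda>k. ennreal (real m * pmf (nu i) k)))"
    unfolding Zmeas_def using dens by (intro PiM_cong refl) auto
  also have "\<dots> = density (Zprior n m) (\<lambda>z. \<Prod>i<n. ennreal (real m * pmf (nu i) (z i)))"
    unfolding Zmeas_def
    by (intro PiM_density) (auto simp flip: dens intro!: prob_space_measure_pmf)
  also have "\<dots> = density (Zprior n m) (\<lambda>z. ennreal (Zdens n m nu z))"
    unfolding Zdens_def by (subst prod_ennreal) auto
  finally show ?thesis .
qed

lemma Vmeas_eq_density:
  assumes m: "0 < m" and par: "par \<in> Vpar n m"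
  shows "Vmeas n m par = density (Prior n m) (\<lambda>x. ennreal (Vdens n m par x))"
proof -
  obtain psi1 psi2 nu where p: "par = (psi1, psi2, nu)"
    by (cases par) auto
  have psi: "\<forall>p\<in>Iset m. 0 \<le> psi1 p \<and> psi1 p < psi2 p \<and> psi2 p \<le> 1"
    and nu: "\<forall>i<n. set_pmf (nu i) \<subseteq> {..<m}"
    using par by (auto simp: p Vpar_def)
  have Udens_nonneg: "0 \<le> Udens m psi1 psi2 u" for u
    using psi by (auto simp: Udens_def intro!: prod_nonneg)
  have Zdens_nonneg: "0 \<le> Zdens n m nu z" for z
    by (auto simp: Zdens_def intro!: prod_nonneg)
  have "Vmeas n m par = density (Uprior m) (\<lambda>u. ennreal (Udens m psi1 psi2 u))
                         \<Otimes>\<^sub>M density (Zprior n m) (\<lambda>z. ennreal (Zdens n m nu z))"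
    unfolding Vmeas_def p using Umeas_eq_density[OF psi] Zmeas_eq_density[OF m nu] by simp
  also have "\<dots> = density (Uprior m \<Otimes>\<^sub>M Zprior n m)
                     (\<lambda>(u, z). ennreal (Udens m psi1 psi2 u) * ennreal (Zdens n m nu z))"
  proof (intro pair_measure_density)
    show "sigma_finite_measure (Zprior n m)"
      by (rule prob_space_imp_sigma_finite, rule prob_space_Zmeas)
    show "sigma_finite_measure (density (Zprior n m) (\<lambda>z. ennreal (Zdens n m nu z)))"
      using prob_space_Zmeas[of n nu] Zmeas_eq_density[OF m nu] by (metis prob_space_imp_sigma_finite)
  qed auto
  also have "(\<lambda>(u, z). ennreal (Udens m psi1 psi2 u) * ennreal (Zdens n m nu z))
             = (\<lambda>x. ennreal (Vdens n m par x))"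
    by (auto simp: Vdens_def p ennreal_mult[symmetric] Udens_nonneg Zdens_nonneg)
  also have "Uprior m \<Otimes>\<^sub>M Zprior n m = Prior n m"
    by (simp add: Prior_def)
  finally show ?thesis .
qed

lemma sets_Vmeas: "0 < m \<Longrightarrow> par \<in> Vpar n m \<Longrightarrow> sets (Vmeas n m par) = sets (Prior n m)"
  by (simp add: Vmeas_eq_density)

lemma measurable_Uprior_component [measurable]: "(\<lambda>u. u q) \<in> borel_measurable (Uprior m)"
proof (cases "q \<in> Iset m")
  case True
  then have "(\<lambda>u. u q) \<in> measurable (Uprior m) (uniform_measure lborel {0..1::real})"
    unfolding Umeas_def by (rule measurable_component_singleton)
  then show ?thesis
    by (simp cong: measurable_cong_sets)
next
  case False
  show ?thesis
  proof (rule measurable_cong[THEN iffD2])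
    fix w assume "w \<in> space (Uprior m)"
    then have "w \<in> PiE (Iset m) (\<lambda>_. UNIV)"
      unfolding Umeas_def space_PiM by simp
    then show "w q = undefined"
      using False by (metis PiE_arb)
  qed simp
qed

lemma measurable_Zprior_component [measurable]: "(\<lambda>z. z i) \<in> measurable (Zprior n m) (count_space UNIV)"
proof (cases "i < n")
  case True
  then have "(\<lambda>z. z i) \<in> measurable (Zprior n m) (measure_pmf (pmf_of_set {..<m}))"
    unfolding Zmeas_def by (intro measurable_component_singleton) auto
  then show ?thesis
    by (simp cong: measurable_cong_sets)
next
  case False
  show ?thesis
  proof (rule measurable_cong[THEN iffD2])
    fix w assume "w \<in> space (Zprior n m)"
    then have "w \<in> PiE {..<n} (\<lambda>_. UNIV)"
      unfolding Zmeas_def space_PiM by simp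
    then show "w i = undefined"
      using False by (metis PiE_arb lessThan_iff)
  qed simp
qed

lemma measurable_Prior_label: "(\<lambda>x. snd x i) \<in> measurable (Prior n m) (count_space UNIV)"
  unfolding Prior_def by measurable

lemma measurable_Tmat_entry [measurable]:
  "(\<lambda>x. Tmat (fst x) (snd x) p) \<in> borel_measurable (Prior n m)"
proof -
  obtain i j where p: "p = (i, j)"
    by (cases p)
  have [measurable]: "(\<lambda>x. Uent (fst x) k h) \<in> borel_measurable (Prior n m)" for k h
    unfolding Uent_def Prior_def by (cases "k \<le> h") auto
  have "(\<lambda>x. Uent (fst x) k (snd x j)) \<in> borel_measurable (Prior n m)" for k
    by (rule measurable_compose_countable'[where g="\<lambda>x. snd x j" and I=UNIV])
       (auto intro: measurable_Prior_label)
  then have "(\<lambda>x. Uent (fst x) (snd x i) (snd x j)) \<in> borel_measurable (Prior n m)"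
    by (rule measurable_compose_countable'[where g="\<lambda>x. snd x i" and I=UNIV])
       (auto intro: measurable_Prior_label)
  then show ?thesis
    by (simp add: Tmat_def p)
qed

lemma pred_Theta [measurable]: "Measurable.pred (Prior n m) (\<lambda>x. x \<in> Theta n m)"
proof -
  have "(\<lambda>x. x \<in> Theta n m)
        = (\<lambda>x. (\<forall>p\<in>Iset m. 0 \<le> fst x p \<and> fst x p \<le> 1) \<and> (\<forall>i\<in>{..<n}. snd x i < m))"
    by (auto simp: Theta_def fun_eq_iff)
  moreover have "Measurable.pred (Prior n m) (\<lambda>x. 0 \<le> fst x p \<and> fst x p \<le> 1)" for p
    unfolding Prior_def by measurable
  moreover have "Measurable.pred (Prior n m) (\<lambda>x. snd x i < m)" for i
    using measurable_Prior_label by (rule measurable_compose) simp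
  ultimately show ?thesis
    by (simp only: pred_intros_logic pred_intros_finite finite_Iset finite_lessThan)
qed

lemma AE_Uprior_unit: "AE u in Uprior m. \<forall>p\<in>Iset m. 0 \<le> u p \<and> u p \<le> 1"
proof (intro AE_finite_allI finite_Iset)
  fix p assume "p \<in> Iset m"
  then have "distr (Uprior m) (uniform_measure lborel {0..1::real}) (\<lambda>u. u p)
             = uniform_measure lborel {0..1::real}"
    unfolding Umeas_def by (intro distr_PiM_component prob_space_uniform_interval) auto
  moreover have "AE x in uniform_measure lborel {0..1::real}. 0 \<le> x \<and> x \<le> 1"
    by (intro AE_uniform_measureI) auto
  ultimately have "AE x in distr (Uprior m) (uniform_measure lborel {0..1::real}) (\<lambda>u. u p). 0 \<le> x \<and> x \<le> 1"
    by (simp only:)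
  then show "AE u in Uprior m. 0 \<le> u p \<and> u p \<le> 1"
    by (rule AE_distrD[rotated]) (simp cong: measurable_cong_sets)
qed

lemma AE_Zprior_less: "0 < m \<Longrightarrow> AE z in Zprior n m. \<forall>i<n. z i < m"
proof -
  assume m: "0 < m"
  have "AE z in Zprior n m. \<forall>i\<in>{..<n}. z i < m"
  proof (intro AE_finite_allI finite_lessThan)
    fix i assume "i \<in> {..<n}"
    then have "distr (Zprior n m) (measure_pmf (pmf_of_set {..<m})) (\<lambda>z. z i)
               = measure_pmf (pmf_of_set {..<m})"
      unfolding Zmeas_def by (intro distr_PiM_component prob_space_measure_pmf) auto
    moreover have "AE x in measure_pmf (pmf_of_set {..<m}). x < m"
      using m by (intro AE_pmfI) (simp add: set_pmf_of_set lessThan_empty_iff)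
    ultimately have "AE x in distr (Zprior n m) (measure_pmf (pmf_of_set {..<m})) (\<lambda>z. z i). x < m"
      by (simp only:)
    then show "AE z in Zprior n m. z i < m"
      by (rule AE_distrD[rotated]) (simp cong: measurable_cong_sets)
  qed
  then show ?thesis
    by (rule eventually_mono) auto
qed

lemma AE_Prior_Theta:
  assumes m: "0 < m"
  shows "AE x in Prior n m. x \<in> Theta n m"
proof -
  interpret P: pair_sigma_finite "Uprior m" "Zprior n m"
    by (intro pair_sigma_finite.intro prob_space_imp_sigma_finite prob_space_Umeas prob_space_Zmeas) simp
  show ?thesis
    unfolding Prior_def
  proof (rule P.AE_pair_measure)
    show "{x \<in> space (Uprior m \<Otimes>\<^sub>M Zprior n m). x \<in> Theta n m} \<in> sets (Uprior m \<Otimes>\<^sub>M Zprior n m)"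
      using pred_Theta[of n m] unfolding Prior_def Measurable.pred_def .
    show "AE u in Uprior m. AE z in Zprior n m. (u, z) \<in> Theta n m"
      using AE_Uprior_unit[of m]
    proof (rule eventually_mono)
      fix u :: "nat \<times> nat \<Rightarrow> real" assume "\<forall>p\<in>Iset m. 0 \<le> u p \<and> u p \<le> 1"
      then show "AE z in Zprior n m. (u, z) \<in> Theta n m"
        using AE_Zprior_less[OF m, of n] by (auto simp: Theta_def elim: eventually_mono)
    qed
  qed
qed

lemma AE_Vmeas_Theta:
  assumes m: "0 < m" and par: "par \<in> Vpar n m"
  shows "AE x in Vmeas n m par. x \<in> Theta n m"
  unfolding Vmeas_eq_density[OF m par] using AE_Prior_Theta[OF m, of n]
  by (subst AE_density) (auto elim: eventually_mono)

definition in_unit_cube :: "nat \<Rightarrow> (nat \<times> nat \<Rightarrow> real) \<Rightarrow> bool"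
  where "in_unit_cube n A \<longleftrightarrow> (\<forall>p\<in>Lset n. 0 \<le> A p \<and> A p \<le> 1)"

lemma in_unit_cube_Tmat:
  assumes "x \<in> Theta n m"
  shows "in_unit_cube n (Tmat (fst x) (snd x))"
  unfolding in_unit_cube_def
proof
  fix p assume "p \<in> Lset n"
  then obtain i j where p: "p = (i, j)" and ij: "j < i" "i < n"
    by (auto simp: Lset_def)
  then have "snd x i < m" "snd x j < m"
    using assms by (auto simp: Theta_def)
  then show "0 \<le> Tmat (fst x) (snd x) p \<and> Tmat (fst x) (snd x) p \<le> 1"
    using assms by (auto simp: Tmat_def p Uent_def Theta_def Iset_def)
qed

lemma in_unit_cube_obs: "in_unit_cube n (\<lambda>p. of_bool (Y p))"
  by (simp add: in_unit_cube_def)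

definition sqdist :: "nat \<Rightarrow> (nat \<times> nat \<Rightarrow> real) \<Rightarrow> (nat \<times> nat \<Rightarrow> real) \<Rightarrow> real"
  where "sqdist n A B = (\<Sum>p\<in>Lset n. (A p - B p)^2)"

definition inv_nbar :: "nat \<Rightarrow> real"
  where "inv_nbar n = 2 / (real n * (real n - 1))"

lemma sqdist_commute: "sqdist n A B = sqdist n B A"
  unfolding sqdist_def by (simp add: power2_commute)

lemma sqdist_nonneg: "0 \<le> sqdist n A B"
  unfolding sqdist_def by (intro sum_nonneg) auto

lemma sqdist_le_card:
  assumes "in_unit_cube n A" "in_unit_cube n B"
  shows "sqdist n A B \<le> card (Lset n)"
proof -
  have "(A p - B p)^2 \<le> 1" if "p \<in> Lset n" for p
  proof -
    have "0 \<le> A p" "A p \<le> 1" "0 \<le> B p" "B p \<le> 1"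
      using assms that by (auto simp: in_unit_cube_def)
    then have "\<bar>A p - B p\<bar> \<le> 1"
      by (simp add: abs_le_iff)
    then show ?thesis
      by (metis abs_ge_zero power2_abs power_le_one)
  qed
  then have "sqdist n A B \<le> (\<Sum>p\<in>Lset n. 1)"
    unfolding sqdist_def by (intro sum_mono)
  then show ?thesis
    by simp
qed

lemma sqdist_le_perturb:
  fixes r :: real
  assumes close: "\<And>p. p \<in> Lset n \<Longrightarrow> \<bar>A p - B p\<bar> \<le> r"
  shows "sqdist n A C \<le> 2 * sqdist n B C + 2 * card (Lset n) * r^2"
proof -
  have "(A p - C p)^2 \<le> 2 * (B p - C p)^2 + 2 * r^2" if p: "p \<in> Lset n" for p
  proof -
    have sq_sum: "(x + y)^2 \<le> 2 * x^2 + 2 * y^2" for x y :: real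
      using zero_le_power2[of "x - y"] by (simp add: power2_eq_square algebra_simps)
    have "A p - C p = (B p - C p) + (A p - B p)"
      by simp
    then have "(A p - C p)^2 \<le> 2 * (B p - C p)^2 + 2 * (A p - B p)^2"
      using sq_sum[of "B p - C p" "A p - B p"] by (simp only:)
    moreover have "(A p - B p)^2 \<le> r^2"
      using power_mono[OF close[OF p] abs_ge_zero, of 2] by simp
    ultimately show ?thesis
      by linarith
  qed
  then have "sqdist n A C \<le> (\<Sum>p\<in>Lset n. 2 * (B p - C p)^2 + 2 * r^2)"
    unfolding sqdist_def by (intro sum_mono)
  then show ?thesis
    by (simp add: sqdist_def sum.distrib sum_distrib_left)
qed

lemma inv_nbar_nonneg: "0 \<le> inv_nbar n"
proof -
  have "0 \<le> real n * (real n - 1)"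
    by (cases n) auto
  then show ?thesis
    by (simp add: inv_nbar_def)
qed

lemma inv_nbar_le:
  assumes "2 \<le> n"
  shows "inv_nbar n \<le> 4 / (real n)^2"
proof -
  have n: "2 \<le> real n"
    using assms by simp
  then have "2 * (real n)^2 \<le> 4 * (real n * (real n - 1))"
    by (simp add: power2_eq_square algebra_simps)
  then show ?thesis
    unfolding inv_nbar_def using n by (simp add: divide_simps)
qed

lemma dist2_eq_sqdist: "dist2 n A B = sqrt (inv_nbar n * sqdist n A B)"
  unfolding dist2_def inv_nbar_def sqdist_def ..

lemma dist2_sq: "dist2 n A B ^ 2 = inv_nbar n * sqdist n A B"
  unfolding dist2_eq_sqdist by (simp add: inv_nbar_nonneg sqdist_nonneg)

lemma dist2_nonneg: "0 \<le> dist2 n A B"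
  unfolding dist2_eq_sqdist by (intro real_sqrt_ge_zero mult_nonneg_nonneg inv_nbar_nonneg sqdist_nonneg)

text \<open>The exponent to which the Donsker--Varadhan inequality is applied.\<close>

definition tilt :: "nat \<Rightarrow> (nat \<times> nat \<Rightarrow> bool) \<Rightarrow> (nat \<times> nat \<Rightarrow> real) \<Rightarrow> (nat \<times> nat \<Rightarrow> real) \<Rightarrow> real"
  where "tilt n Y Om T = sqdist n T Om / 2
           - (sqdist n (\<lambda>p. of_bool (Y p)) T - sqdist n (\<lambda>p. of_bool (Y p)) Om)"

lemma abs_tilt_le:
  assumes "in_unit_cube n T" "in_unit_cube n Om"
  shows "\<bar>tilt n Y Om T\<bar> \<le> 3 * card (Lset n)"
proof -
  let ?Y = "\<lambda>p. of_bool (Y p)"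
  have "sqdist n T Om \<le> card (Lset n)" "sqdist n ?Y T \<le> card (Lset n)"
    "sqdist n ?Y Om \<le> card (Lset n)"
    by (intro sqdist_le_card assms in_unit_cube_obs)+
  moreover have "0 \<le> sqdist n T Om" "0 \<le> sqdist n ?Y T" "0 \<le> sqdist n ?Y Om"
    by (rule sqdist_nonneg)+
  ultimately show ?thesis
    unfolding tilt_def abs_le_iff by linarith
qed

lemma measurable_sqdist_Tmat_left [measurable]:
  "(\<lambda>x. sqdist k (Tmat (fst x) (snd x)) A) \<in> borel_measurable (Prior n m)"
  unfolding sqdist_def by measurable

lemma measurable_sqdist_Tmat_right [measurable]:
  "(\<lambda>x. sqdist k A (Tmat (fst x) (snd x))) \<in> borel_measurable (Prior n m)"
  unfolding sqdist_def by measurable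

lemma measurable_tilt_Tmat [measurable]:
  "(\<lambda>x. tilt k Y Om (Tmat (fst x) (snd x))) \<in> borel_measurable (Prior n m)"
  unfolding tilt_def by measurable

lemma integrable_Vmeas_sqdist:
  assumes m: "0 < m" and par: "par \<in> Vpar n m" and A: "in_unit_cube n A"
  shows "integrable (Vmeas n m par) (\<lambda>x. sqdist n (Tmat (fst x) (snd x)) A)"
proof -
  interpret V: prob_space "Vmeas n m par"
    by (rule prob_space_Vmeas[OF par])
  show ?thesis
  proof (rule V.integrable_const_bound[where B="card (Lset n)"])
    show "AE x in Vmeas n m par. norm (sqdist n (Tmat (fst x) (snd x)) A) \<le> card (Lset n)"
      using AE_Vmeas_Theta[OF m par]
      by (rule eventually_mono) (simp add: sqdist_nonneg sqdist_le_card in_unit_cube_Tmat A)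
  qed (simp add: measurable_cong_sets[OF sets_Vmeas[OF m par] refl])
qed

lemma neg_ln_qlik: "- ln (qlik n T Y) = sqdist n (\<lambda>p. of_bool (Y p)) T"
  unfolding qlik_def sqdist_def by (simp add: ln_prod sum_negf)

lemma Energy_eq:
  "Energy n m Y Xi = (\<integral>x. sqdist n (\<lambda>p. of_bool (Y p)) (Tmat (fst x) (snd x)) \<partial>Xi)
                      + KL_divergence (exp 1) (Prior n m) Xi"
  by (simp add: Energy_def neg_ln_qlik)

lemma AE_Prior_abs_tilt_le:
  assumes "0 < m" "in_unit_cube n Om"
  shows "AE x in Prior n m. \<bar>tilt n Y Om (Tmat (fst x) (snd x))\<bar> \<le> 3 * card (Lset n)"
  using AE_Prior_Theta[OF assms(1)] by (rule eventually_mono) (intro abs_tilt_le in_unit_cube_Tmat assms(2))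

lemma integral_half_sqdist_le_Energy:
  assumes m: "0 < m" and par: "par \<in> Vpar n m" and Om: "in_unit_cube n Om"
  shows "(\<integral>x. sqdist n (Tmat (fst x) (snd x)) Om / 2 \<partial>Vmeas n m par)
         \<le> Energy n m Y (Vmeas n m par) - sqdist n (\<lambda>p. of_bool (Y p)) Om
            + ln (\<integral>x. exp (tilt n Y Om (Tmat (fst x) (snd x))) \<partial>Prior n m)"
proof -
  interpret V: prob_space "Vmeas n m par"
    by (rule prob_space_Vmeas[OF par])
  interpret P: prob_space "Prior n m"
    by (rule prob_space_Prior)
  obtain B where B: "\<And>x. Vdens n m par x \<le> B"
    using Vdens_bounded[OF par] by blast
  have "prob_space (density (Prior n m) (\<lambda>x. ennreal (Vdens n m par x)))"
    using prob_space_Vmeas[OF par] by (simp add: Vmeas_eq_density[OF m par])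
  from P.Donsker_Varadhan_density[OF measurable_Vdens measurable_tilt_Tmat Vdens_nonneg[OF par] B
      this AE_Prior_abs_tilt_le[OF m Om]]
  have "(\<integral>x. tilt n Y Om (Tmat (fst x) (snd x)) \<partial>Vmeas n m par)
        \<le> KL_divergence (exp 1) (Prior n m) (Vmeas n m par)
           + ln (\<integral>x. exp (tilt n Y Om (Tmat (fst x) (snd x))) \<partial>Prior n m)"
    by (simp add: Vmeas_eq_density[OF m par])
  moreover have "(\<integral>x. tilt n Y Om (Tmat (fst x) (snd x)) \<partial>Vmeas n m par)
      = (\<integral>x. sqdist n (Tmat (fst x) (snd x)) Om / 2 \<partial>Vmeas n m par)
        - (\<integral>x. sqdist n (\<lambda>p. of_bool (Y p)) (Tmat (fst x) (snd x)) \<partial>Vmeas n m par)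
        + sqdist n (\<lambda>p. of_bool (Y p)) Om"
    using integrable_Vmeas_sqdist[OF m par Om] integrable_Vmeas_sqdist[OF m par in_unit_cube_obs, of Y]
    unfolding tilt_def by (simp add: sqdist_commute[of n _ "Tmat _ _"] V.prob_space)
  ultimately show ?thesis
    by (simp add: Energy_eq)
qed

section \<open>Expectations over the data\<close>

lemma finite_set_Pdata: "finite (set_pmf (Pdata n Om))"
proof -
  have "set_pmf (Pdata n Om) \<subseteq> PiE_dflt (Lset n) False (\<lambda>_. UNIV)"
    unfolding Pdata_def using set_Pi_pmf_subset[of "Lset n" False] by (auto simp: PiE_dflt_def)
  moreover have "finite (PiE_dflt (Lset n) False (\<lambda>_. UNIV :: bool set))"
    by (intro finite_PiE_dflt) auto
  ultimately show ?thesis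
    by (rule finite_subset)
qed

lemma integrable_Pdata [simp]:
  fixes f :: "_ \<Rightarrow> real"
  shows "integrable (measure_pmf (Pdata n Om)) f"
  by (rule integrable_measure_pmf_finite[OF finite_set_Pdata])

lemma expectation_integral_swap:
  fixes f :: "'b \<Rightarrow> 'a \<Rightarrow> real"
  assumes fin: "finite (set_pmf P)" and int: "\<And>Y. integrable Q (f Y)"
  shows "measure_pmf.expectation P (\<lambda>Y. \<integral>x. f Y x \<partial>Q)
         = (\<integral>x. measure_pmf.expectation P (\<lambda>Y. f Y x) \<partial>Q)"
proof -
  have "measure_pmf.expectation P (\<lambda>Y. \<integral>x. f Y x \<partial>Q) = (\<Sum>Y\<in>set_pmf P. pmf P Y * (\<integral>x. f Y x \<partial>Q))"
    by (subst integral_measure_pmf[OF fin]) auto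
  also have "\<dots> = (\<integral>x. (\<Sum>Y\<in>set_pmf P. pmf P Y * f Y x) \<partial>Q)"
    by (rule sym, subst Bochner_Integration.integral_sum) (use int in auto)
  also have "\<dots> = (\<integral>x. measure_pmf.expectation P (\<lambda>Y. f Y x) \<partial>Q)"
    by (intro Bochner_Integration.integral_cong refl) (subst integral_measure_pmf[OF fin], auto)
  finally show ?thesis .
qed

lemma expectation_Pdata_sum:
  fixes g :: "nat \<times> nat \<Rightarrow> bool \<Rightarrow> real"
  shows "measure_pmf.expectation (Pdata n Om) (\<lambda>Y. \<Sum>p\<in>Lset n. g p (Y p))
         = (\<Sum>p\<in>Lset n. measure_pmf.expectation (bernoulli_pmf (Om p)) (g p))"
proof -
  have "measure_pmf.expectation (Pdata n Om) (\<lambda>Y. g p (Y p))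
        = measure_pmf.expectation (bernoulli_pmf (Om p)) (g p)" if "p \<in> Lset n" for p
  proof -
    have "map_pmf (\<lambda>Y. Y p) (Pdata n Om) = bernoulli_pmf (Om p)"
      unfolding Pdata_def using that by (subst Pi_pmf_component) auto
    then show ?thesis
      by (metis integral_map_pmf)
  qed
  then show ?thesis
    by (simp add: Bochner_Integration.integral_sum)
qed

lemma expectation_Pdata_prod:
  fixes g :: "nat \<times> nat \<Rightarrow> bool \<Rightarrow> real"
  assumes "\<And>p y. 0 \<le> g p y"
  shows "measure_pmf.expectation (Pdata n Om) (\<lambda>Y. \<Prod>p\<in>Lset n. g p (Y p))
         = (\<Prod>p\<in>Lset n. measure_pmf.expectation (bernoulli_pmf (Om p)) (g p))"
  unfolding Pdata_def
  by (subst expectation_prod_Pi_pmf) (auto simp: assms integrable_measure_pmf_finite)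

lemma expectation_exp_tilt_le_1:
  assumes Om: "in_unit_cube n Om"
  shows "measure_pmf.expectation (Pdata n Om) (\<lambda>Y. exp (tilt n Y Om T)) \<le> 1"
proof -
  define g where "g p y = exp ((T p - Om p)^2 / 2 - (of_bool y - T p)^2 + (of_bool y - Om p)^2)"
    for p y
  have eq: "exp (tilt n Y Om T) = (\<Prod>p\<in>Lset n. g p (Y p))" for Y
  proof -
    have "tilt n Y Om T
          = (\<Sum>p\<in>Lset n. (T p - Om p)^2 / 2 - (of_bool (Y p) - T p)^2 + (of_bool (Y p) - Om p)^2)"
      unfolding tilt_def sqdist_def by (simp add: sum.distrib sum_subtractf sum_divide_distrib)
    then show ?thesis
      by (simp add: g_def exp_sum)
  qed
  have "measure_pmf.expectation (Pdata n Om) (\<lambda>Y. exp (tilt n Y Om T))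
        = measure_pmf.expectation (Pdata n Om) (\<lambda>Y. \<Prod>p\<in>Lset n. g p (Y p))"
    by (simp only: eq)
  also have "\<dots> = (\<Prod>p\<in>Lset n. measure_pmf.expectation (bernoulli_pmf (Om p)) (g p))"
    by (rule expectation_Pdata_prod) (simp add: g_def)
  also have "\<dots> \<le> (\<Prod>p\<in>Lset n. 1)"
  proof (intro prod_mono conjI integral_nonneg_AE AE_I2)
    fix p assume "p \<in> Lset n"
    then show "measure_pmf.expectation (bernoulli_pmf (Om p)) (g p) \<le> 1"
      unfolding g_def using Om
      by (intro expectation_bernoulli_exp_excess_loss_le_1) (auto simp: in_unit_cube_def)
  qed (simp add: g_def)
  finally show ?thesis
    by simp
qed

lemma expectation_excess_loss:
  assumes Om: "in_unit_cube n Om"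
  shows "measure_pmf.expectation (Pdata n Om)
           (\<lambda>Y. sqdist n (\<lambda>p. of_bool (Y p)) T - sqdist n (\<lambda>p. of_bool (Y p)) Om) = sqdist n T Om"
proof -
  define G where "G p y = (of_bool y - T p)^2 - (of_bool y - Om p)^2" for p y
  have "(\<lambda>Y. sqdist n (\<lambda>p. of_bool (Y p)) T - sqdist n (\<lambda>p. of_bool (Y p)) Om)
        = (\<lambda>Y. \<Sum>p\<in>Lset n. G p (Y p))"
    unfolding sqdist_def G_def by (simp add: sum_subtractf)
  then have "measure_pmf.expectation (Pdata n Om)
               (\<lambda>Y. sqdist n (\<lambda>p. of_bool (Y p)) T - sqdist n (\<lambda>p. of_bool (Y p)) Om)
             = (\<Sum>p\<in>Lset n. measure_pmf.expectation (bernoulli_pmf (Om p)) (G p))"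
    by (simp only: expectation_Pdata_sum)
  also have "\<dots> = sqdist n T Om"
    unfolding sqdist_def G_def using Om
    by (intro sum.cong refl expectation_bernoulli_excess_loss) (auto simp: in_unit_cube_def)
  finally show ?thesis .
qed

section \<open>A comparison member of the variational family\<close>

definition box_witness :: "nat \<Rightarrow> (nat \<times> nat \<Rightarrow> real) \<Rightarrow> (nat \<Rightarrow> nat)
    \<Rightarrow> (nat \<times> nat \<Rightarrow> real) \<times> (nat \<times> nat \<Rightarrow> real) \<times> (nat \<Rightarrow> nat pmf)"
  where "box_witness n u0 z0 =
           (\<lambda>p. min (u0 p) (1 - 1 / real n), \<lambda>p. min (u0 p) (1 - 1 / real n) + 1 / real n,
            \<lambda>i. return_pmf (z0 i))"

lemma box_witness_in_Vpar:
  assumes n: "2 \<le> n" and th: "(u0, z0) \<in> Theta n m"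
  shows "box_witness n u0 z0 \<in> Vpar n m"
proof -
  have "0 < 1 / real n" "1 / real n \<le> 1"
    using n by auto
  then show ?thesis
    using th unfolding box_witness_def Vpar_def Theta_def by auto
qed

lemma Vdens_box_witness:
  assumes n: "2 \<le> n" and th: "(u0, z0) \<in> Theta n m"
    and x: "Vdens n m (box_witness n u0 z0) x \<noteq> 0"
  shows "Vdens n m (box_witness n u0 z0) x = real n ^ card (Iset m) * real m ^ n"
    and "\<And>p. p \<in> Iset m \<Longrightarrow> \<bar>fst x p - u0 p\<bar> \<le> 1 / real n"
    and "\<And>i. i < n \<Longrightarrow> snd x i = z0 i"
proof -
  define a where "a = (\<lambda>p. min (u0 p) (1 - 1 / real n))"
  have w: "box_witness n u0 z0 = (a, \<lambda>p. a p + 1 / real n, \<lambda>i. return_pmf (z0 i))"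
    unfolding box_witness_def a_def by simp
  have n_pos: "0 < 1 / real n"
    using n by auto
  have U: "Udens m a (\<lambda>p. a p + 1 / real n) (fst x) \<noteq> 0"
    and Z: "Zdens n m (\<lambda>i. return_pmf (z0 i)) (snd x) \<noteq> 0"
    using x by (auto simp: Vdens_def w)
  have box: "fst x p \<in> {a p .. a p + 1 / real n}" if "p \<in> Iset m" for p
    using U that by (auto simp: Udens_def indicator_def split: if_splits)
  show labels: "snd x i = z0 i" if "i < n" for i
    using Z that by (auto simp: Zdens_def indicator_def split: if_splits)
  show "\<bar>fst x p - u0 p\<bar> \<le> 1 / real n" if p: "p \<in> Iset m" for p
  proof -
    have "0 \<le> u0 p" "u0 p \<le> 1"
      using th p by (auto simp: Theta_def)
    then have "a p \<le> u0 p" "u0 p \<le> a p + 1 / real n"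
      by (auto simp: a_def min_def)
    then show ?thesis
      using box[OF p] by auto
  qed
  have "Udens m a (\<lambda>p. a p + 1 / real n) (fst x) = (\<Prod>p\<in>Iset m. real n)"
    unfolding Udens_def using box n_pos by (intro prod.cong refl) (auto simp: indicator_def)
  moreover have "Zdens n m (\<lambda>i. return_pmf (z0 i)) (snd x) = (\<Prod>i<n. real m)"
    unfolding Zdens_def using labels by (intro prod.cong refl) auto
  ultimately show "Vdens n m (box_witness n u0 z0) x = real n ^ card (Iset m) * real m ^ n"
    by (simp add: Vdens_def w)
qed

text \<open>The witness density is constant on its support, so its entropy relative to the
  prior is the logarithm of that constant.\<close>

lemma KL_box_witness:
  assumes n: "2 \<le> n" and m: "0 < m" and th: "(u0, z0) \<in> Theta n m"
  shows "KL_divergence (exp 1) (Prior n m) (Vmeas n m (box_witness n u0 z0))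
         = real (card (Iset m)) * ln (real n) + real n * ln (real m)"
proof -
  define w where "w = box_witness n u0 z0"
  define K where "K = real n ^ card (Iset m) * real m ^ n"
  have w_in: "w \<in> Vpar n m"
    unfolding w_def by (rule box_witness_in_Vpar[OF n th])
  interpret prob_space "Prior n m"
    by (rule prob_space_Prior)
  have "prob_space (density (Prior n m) (\<lambda>x. ennreal (Vdens n m w x)))"
    using prob_space_Vmeas[OF w_in] by (simp add: Vmeas_eq_density[OF m w_in])
  then have int_1: "integrable (Prior n m) (Vdens n m w)" "(\<integral>x. Vdens n m w x \<partial>Prior n m) = 1"
    using density_integral_eq_1[OF measurable_Vdens] Vdens_nonneg[OF w_in] by auto
  have "KL_divergence (exp 1) (Prior n m) (Vmeas n m w)
        = (\<integral>x. Vdens n m w x * ln (Vdens n m w x) \<partial>Prior n m)"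
    using KL_density[of "exp 1" "Vdens n m w"] Vdens_nonneg[OF w_in]
    by (simp add: log_def Vmeas_eq_density[OF m w_in])
  also have "\<dots> = (\<integral>x. Vdens n m w x * ln K \<partial>Prior n m)"
  proof (intro Bochner_Integration.integral_cong refl)
    fix x
    show "Vdens n m w x * ln (Vdens n m w x) = Vdens n m w x * ln K"
      using Vdens_box_witness(1)[OF n th, of x] by (cases "Vdens n m w x = 0") (auto simp: w_def K_def)
  qed
  also have "\<dots> = ln K"
    using int_1 by simp
  also have "\<dots> = real (card (Iset m)) * ln (real n) + real n * ln (real m)"
    unfolding K_def using n m by (simp add: ln_mult ln_realpow)
  finally show ?thesis
    by (simp add: w_def)
qed

lemma Tmat_box_witness_close:
  assumes n: "2 \<le> n" and th: "(u0, z0) \<in> Theta n m"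
    and x: "Vdens n m (box_witness n u0 z0) x \<noteq> 0" and p: "p \<in> Lset n"
  shows "\<bar>Tmat (fst x) (snd x) p - Tmat u0 z0 p\<bar> \<le> 1 / real n"
proof -
  obtain i j where p_eq: "p = (i, j)" and ij: "j < i" "i < n"
    using p by (auto simp: Lset_def)
  have labels: "snd x i = z0 i" "snd x j = z0 j"
    using Vdens_box_witness(3)[OF n th x] ij by auto
  have "z0 i < m" "z0 j < m"
    using th ij by (auto simp: Theta_def)
  then have "(min (z0 i) (z0 j), max (z0 i) (z0 j)) \<in> Iset m"
    by (auto simp: Iset_def)
  from Vdens_box_witness(2)[OF n th x this] show ?thesis
    by (auto simp: Tmat_def p_eq Uent_def labels min_def max_def split: if_splits)
qed

lemma integral_sqdist_box_witness:
  assumes n: "2 \<le> n" and m: "0 < m" and th: "(u0, z0) \<in> Theta n m"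
  shows "(\<integral>x. sqdist n (Tmat (fst x) (snd x)) Om \<partial>Vmeas n m (box_witness n u0 z0))
         \<le> 2 * sqdist n (Tmat u0 z0) Om + 2 * card (Lset n) * (1 / real n)^2"
    (is "_ \<le> ?B")
proof -
  define w where "w = box_witness n u0 z0"
  have w_in: "w \<in> Vpar n m"
    unfolding w_def by (rule box_witness_in_Vpar[OF n th])
  interpret V: prob_space "Vmeas n m w"
    by (rule prob_space_Vmeas[OF w_in])
  have "AE x in Vmeas n m w. Vdens n m w x \<noteq> 0"
    unfolding Vmeas_eq_density[OF m w_in] by (subst AE_density) auto
  then have bound: "AE x in Vmeas n m w. sqdist n (Tmat (fst x) (snd x)) Om \<le> ?B"
    by (rule eventually_mono)
       (intro sqdist_le_perturb Tmat_box_witness_close[OF n th], simp_all add: w_def)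
  have "integrable (Vmeas n m w) (\<lambda>x. sqdist n (Tmat (fst x) (snd x)) Om)"
    by (rule V.integrable_const_bound[where B="?B"])
       (use bound sqdist_nonneg in \<open>auto elim!: eventually_mono
         simp: measurable_cong_sets[OF sets_Vmeas[OF m w_in] refl]\<close>)
  then have "(\<integral>x. sqdist n (Tmat (fst x) (snd x)) Om \<partial>Vmeas n m w) \<le> (\<integral>x. ?B \<partial>Vmeas n m w)"
    using bound by (intro integral_mono_AE) auto
  then show ?thesis
    by (simp add: V.prob_space flip: w_def)
qed

section \<open>Model complexity and the rate\<close>

definition complexity :: "nat \<Rightarrow> nat \<Rightarrow> real"
  where "complexity n m = real m ^ 2 * ln (real n) + real n * ln (real m)"

definition rate_penalty :: "nat \<Rightarrow> nat \<Rightarrow> real"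
  where "rate_penalty n m = sqrt (real m ^ 2 / real n ^ 2 * ln (real n) + ln (real m) / real n)"

definition approx_err :: "nat \<Rightarrow> nat \<Rightarrow> (nat \<times> nat \<Rightarrow> real) \<Rightarrow> real"
  where "approx_err n m Om = Inf ((\<lambda>(u, z). dist2 n (Tmat u z) Om) ` Theta n m)"

lemma eps_rate_eq: "eps_rate n L M = Inf ((\<lambda>m. Sup (approx_err n m ` L) + rate_penalty n m) ` M)"
  unfolding eps_rate_def approx_err_def rate_penalty_def ..

lemma ln_ge_half:
  assumes "2 \<le> n"
  shows "1 / 2 \<le> ln (real n)"
proof -
  have "1 / 2 = ln (exp (1 / 2 :: real))"
    by simp
  also have "\<dots> \<le> ln 2"
    using exp_half_le2 by (intro ln_mono) auto
  also have "\<dots> \<le> ln (real n)"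
    using assms by (intro ln_mono) auto
  finally show ?thesis .
qed

lemma ln_le_complexity:
  assumes n: "2 \<le> n" and m: "1 \<le> m"
  shows "ln (real n) \<le> complexity n m"
proof -
  have "ln (real n) \<le> real m ^ 2 * ln (real n)"
    using ln_ge_half[OF n] m by (simp add: mult_le_cancel_right1)
  moreover have "0 \<le> real n * ln (real m)"
    using m by simp
  ultimately show ?thesis
    unfolding complexity_def by linarith
qed

lemma rate_penalty_sq:
  assumes n: "2 \<le> n" and m: "1 \<le> m"
  shows "rate_penalty n m ^ 2 = complexity n m / real n ^ 2"
proof -
  have "0 \<le> real m ^ 2 / real n ^ 2 * ln (real n) + ln (real m) / real n"
    using n m by simp
  moreover have "real m ^ 2 / real n ^ 2 * ln (real n) + ln (real m) / real n = complexity n m / real n ^ 2"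
    unfolding complexity_def using n by (simp add: field_simps power2_eq_square)
  ultimately show ?thesis
    unfolding rate_penalty_def by simp
qed

lemma rate_penalty_pos:
  assumes n: "2 \<le> n" and m: "1 \<le> m"
  shows "0 < rate_penalty n m"
proof -
  have "0 < real m ^ 2 / real n ^ 2 * ln (real n)"
    using n m by simp
  moreover have "0 \<le> ln (real m) / real n"
    using m by simp
  ultimately show ?thesis
    unfolding rate_penalty_def by simp
qed

lemma inv_nbar_complexity_le:
  assumes n: "2 \<le> n" and m: "1 \<le> m"
  shows "inv_nbar n * complexity n m \<le> 4 * rate_penalty n m ^ 2"
proof -
  have "0 \<le> complexity n m"
    using ln_le_complexity[OF n m] ln_ge_half[OF n] by linarith
  then have "inv_nbar n * complexity n m \<le> 4 / real n ^ 2 * complexity n m"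
    using inv_nbar_le[OF n] by (intro mult_right_mono)
  then show ?thesis
    by (simp add: rate_penalty_sq[OF n m])
qed

lemma approx_err_le:
  assumes "(u, z) \<in> Theta n m"
  shows "approx_err n m Om \<le> dist2 n (Tmat u z) Om"
  unfolding approx_err_def using assms
  by (intro cInf_lower bdd_belowI[of _ 0]) (auto simp: dist2_nonneg)

lemma zero_in_Theta: "0 < m \<Longrightarrow> (\<lambda>_. 0, \<lambda>_. 0) \<in> Theta n m"
  by (simp add: Theta_def)

lemma approx_err_nonneg:
  assumes "0 < m"
  shows "0 \<le> approx_err n m Om"
  unfolding approx_err_def using zero_in_Theta[OF assms]
  by (intro cInf_greatest) (auto simp: dist2_nonneg)

lemma exists_approx_err_less:
  assumes m: "0 < m" and d: "0 < d"
  obtains u z where "(u, z) \<in> Theta n m" "dist2 n (Tmat u z) Om < approx_err n m Om + d"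
proof -
  have "Inf ((\<lambda>(u, z). dist2 n (Tmat u z) Om) ` Theta n m) < approx_err n m Om + d"
    using d by (simp add: approx_err_def)
  then obtain y where "y \<in> (\<lambda>(u, z). dist2 n (Tmat u z) Om) ` Theta n m" "y < approx_err n m Om + d"
    using zero_in_Theta[OF m] by (subst (asm) cInf_less_iff) (auto intro: bdd_belowI[of _ 0] dist2_nonneg)
  then show ?thesis
    using that by auto
qed

lemma bdd_above_approx_err:
  assumes m: "0 < m" and L: "\<And>Om. Om \<in> L \<Longrightarrow> in_unit_cube n Om"
  shows "bdd_above (approx_err n m ` L)"
proof (rule bdd_aboveI2)
  fix Om assume "Om \<in> L"
  have "in_unit_cube n (Tmat (\<lambda>_. 0) (\<lambda>_. 0))"
    using in_unit_cube_Tmat[OF zero_in_Theta[OF m, of n]] by simp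
  then have "sqdist n (Tmat (\<lambda>_. 0) (\<lambda>_. 0)) Om \<le> card (Lset n)"
    using L[OF \<open>Om \<in> L\<close>] by (intro sqdist_le_card) auto
  then have "dist2 n (Tmat (\<lambda>_. 0) (\<lambda>_. 0)) Om \<le> sqrt (inv_nbar n * card (Lset n))"
    unfolding dist2_eq_sqdist by (intro real_sqrt_le_mono mult_left_mono inv_nbar_nonneg)
  then show "approx_err n m Om \<le> sqrt (inv_nbar n * card (Lset n))"
    using approx_err_le[OF zero_in_Theta[OF m]] by (meson order.trans)
qed

lemma eps_rate_witness:
  assumes n: "2 \<le> n" and M: "M \<noteq> {}" "M \<subseteq> {1..n}"
    and L: "\<And>Om. Om \<in> L \<Longrightarrow> in_unit_cube n Om" and Om: "Om \<in> L"
  obtains m0 u0 z0 where "m0 \<in> M" "(u0, z0) \<in> Theta n m0"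
    "dist2 n (Tmat u0 z0) Om + rate_penalty n m0 \<le> 2 * eps_rate n L M" "0 < eps_rate n L M"
proof -
  define g where "g m = Sup (approx_err n m ` L) + rate_penalty n m" for m
  have "finite M"
    using M(2) by (rule finite_subset) simp
  then have "Inf (g ` M) \<in> g ` M"
    using M(1) by (simp add: cInf_eq_Min)
  moreover have "eps_rate n L M = Inf (g ` M)"
    unfolding eps_rate_eq g_def ..
  ultimately obtain m0 where m0: "m0 \<in> M" "g m0 = eps_rate n L M"
    by auto
  have m0_pos: "1 \<le> m0"
    using m0 M by auto
  have "approx_err n m0 Om \<le> Sup (approx_err n m0 ` L)"
    using Om bdd_above_approx_err[OF _ L] m0_pos by (intro cSup_upper) auto
  then have le_g: "approx_err n m0 Om + rate_penalty n m0 \<le> g m0"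
    by (simp add: g_def)
  then have g_pos: "0 < g m0"
    using approx_err_nonneg[of m0 n Om] rate_penalty_pos[OF n m0_pos] m0_pos by linarith
  obtain u0 z0 where "(u0, z0) \<in> Theta n m0" "dist2 n (Tmat u0 z0) Om < approx_err n m0 Om + g m0"
    using exists_approx_err_less[of m0 "g m0" n Om] m0_pos g_pos by auto
  with le_g show ?thesis
    using that m0 g_pos by fastforce
qed

lemma alpha_eq:
  "alpha b0 n M m = exp (- b0 * complexity n m) / (\<Sum>m'\<in>M. exp (- b0 * complexity n m'))"
  by (simp add: alpha_def complexity_def)

lemma alpha_pos:
  assumes "finite M" "M \<noteq> {}"
  shows "0 < alpha b0 n M m"
  unfolding alpha_eq using assms by (intro divide_pos_pos sum_pos) auto

lemma sum_alpha:
  assumes "finite M" "M \<noteq> {}"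
  shows "(\<Sum>m\<in>M. alpha b0 n M m) = 1"
proof -
  have "0 < (\<Sum>m'\<in>M. exp (- b0 * complexity n m'))"
    using assms by (intro sum_pos) auto
  then show ?thesis
    unfolding alpha_eq by (simp flip: sum_divide_distrib)
qed

lemma neg_ln_alpha_le:
  assumes b0: "0 \<le> b0" and n: "2 \<le> n" and M: "M \<subseteq> {1..n}" and m: "m \<in> M"
  shows "- ln (alpha b0 n M m) \<le> b0 * complexity n m + ln (real n)"
proof -
  define W where "W = (\<Sum>m'\<in>M. exp (- b0 * complexity n m'))"
  have fin: "finite M"
    using M by (rule finite_subset) simp
  have W_pos: "0 < W"
    unfolding W_def using fin m by (intro sum_pos) auto
  have "exp (- b0 * complexity n m') \<le> 1" if "m' \<in> M" for m'
  proof -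
    have "0 \<le> complexity n m'"
      using ln_le_complexity[OF n, of m'] ln_ge_half[OF n] that M by force
    then show ?thesis
      using b0 by (simp add: mult_nonneg_nonneg)
  qed
  then have "W \<le> (\<Sum>m'\<in>M. 1)"
    unfolding W_def by (rule sum_mono)
  also have "\<dots> = card M"
    by simp
  also have "card M \<le> n"
    using card_mono[OF _ M] by simp
  finally have "ln W \<le> ln (real n)"
    using W_pos by (intro ln_mono) auto
  moreover have "- ln (alpha b0 n M m) = b0 * complexity n m + ln W"
    unfolding alpha_eq W_def[symmetric] using W_pos by (simp add: ln_div)
  ultimately show ?thesis
    by simp
qed

section \<open>The oracle inequality\<close>

lemma measure_dist2_ge_le:
  assumes m: "0 < m" and par: "par \<in> Vpar n m" and Om: "in_unit_cube n Om" and c: "0 < c"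
  shows "measure (Vmeas n m par) {x \<in> space (Vmeas n m par). c \<le> dist2 n (Tmat (fst x) (snd x)) Om}
         \<le> inv_nbar n * (\<integral>x. sqdist n (Tmat (fst x) (snd x)) Om \<partial>Vmeas n m par) / c^2"
proof -
  have "c \<le> sqrt y \<longleftrightarrow> c^2 \<le> y" for y
  proof -
    have "c \<le> sqrt y \<longleftrightarrow> sqrt (c^2) \<le> sqrt y"
      using c by simp
    also have "\<dots> \<longleftrightarrow> c^2 \<le> y"
      by (rule real_sqrt_le_iff)
    finally show ?thesis .
  qed
  then have "{x \<in> space (Vmeas n m par). c \<le> dist2 n (Tmat (fst x) (snd x)) Om}
             = {x \<in> space (Vmeas n m par). c^2 \<le> inv_nbar n * sqdist n (Tmat (fst x) (snd x)) Om}"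
    unfolding dist2_eq_sqdist using inv_nbar_nonneg sqdist_nonneg by (auto intro: mult_nonneg_nonneg)
  also have "measure (Vmeas n m par) \<dots>
             \<le> (\<integral>x. inv_nbar n * sqdist n (Tmat (fst x) (snd x)) Om \<partial>Vmeas n m par) / c^2"
    using integrable_Vmeas_sqdist[OF m par Om] c
    by (intro integral_Markov_inequality_measure[where A="space (Vmeas n m par)"])
       (auto intro: mult_nonneg_nonneg inv_nbar_nonneg sqdist_nonneg)
  finally show ?thesis
    by simp
qed

lemma integral_exp_tilt_pos:
  assumes "0 < m" "in_unit_cube n Om"
  shows "0 < (\<integral>x. exp (tilt n Y Om (Tmat (fst x) (snd x))) \<partial>Prior n m)"
proof -
  interpret prob_space "Prior n m"
    by (rule prob_space_Prior)
  show ?thesis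
    using AE_Prior_abs_tilt_le[OF assms] by (rule integral_exp_pos_AE_bounded[rotated]) simp
qed

lemma post_prob_dist2_ge_le:
  assumes M: "M \<noteq> {}" "M \<subseteq> {1..n}"
    and sel_in: "\<And>m. m \<in> M \<Longrightarrow> sel m \<in> Vpar n m"
    and sel_min: "\<And>m par. m \<in> M \<Longrightarrow> par \<in> Vpar n m \<Longrightarrow>
                   Energy n m Y (Vmeas n m (sel m)) \<le> Energy n m Y (Vmeas n m par)"
    and Om: "in_unit_cube n Om" and m0: "m0 \<in> M" and par0: "par0 \<in> Vpar n m0" and c: "0 < c"
  shows "post_prob b0 n M Y sel (\<lambda>u z. c \<le> dist2 n (Tmat u z) Om)
         \<le> 2 * inv_nbar n / c^2 *
            ((\<integral>x. sqdist n (\<lambda>p. of_bool (Y p)) (Tmat (fst x) (snd x)) \<partial>Vmeas n m0 par0)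
             - sqdist n (\<lambda>p. of_bool (Y p)) Om
             + KL_divergence (exp 1) (Prior n m0) (Vmeas n m0 par0) - ln (alpha b0 n M m0)
             + ln (\<Sum>m\<in>M. alpha b0 n M m * (\<integral>x. exp (tilt n Y Om (Tmat (fst x) (snd x))) \<partial>Prior n m)))"
    (is "_ \<le> 2 * inv_nbar n / c^2 * ?bracket" is "_ \<le> ?rhs")
proof -
  have fin: "finite M"
    using M(2) by (rule finite_subset) simp
  have m_pos: "0 < m" if "m \<in> M" for m
    using M(2) that by auto
  define E where "E m = Energy n m Y (Vmeas n m (sel m))" for m
  define D where "D m = (\<integral>x. sqdist n (Tmat (fst x) (snd x)) Om / 2 \<partial>Vmeas n m (sel m))" for m
  have gamma_nonneg: "0 \<le> gamma b0 n M Y sel m" for m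
    unfolding gamma_def using alpha_pos[OF fin M(1)]
    by (intro divide_nonneg_nonneg mult_nonneg_nonneg sum_nonneg) (auto intro: less_imp_le)
  have "post_prob b0 n M Y sel (\<lambda>u z. c \<le> dist2 n (Tmat u z) Om)
        \<le> (\<Sum>m\<in>M. gamma b0 n M Y sel m * (2 * inv_nbar n / c^2 * D m))"
    unfolding post_prob_def D_def
    using measure_dist2_ge_le[OF m_pos sel_in Om c]
    by (intro sum_mono mult_left_mono gamma_nonneg) (simp_all add: field_simps)
  also have "\<dots> = 2 * inv_nbar n / c^2 * (\<Sum>m\<in>M. gamma b0 n M Y sel m * D m)"
    by (simp add: sum_distrib_left algebra_simps)
  also have "\<dots> \<le> ?rhs"
  proof (intro mult_left_mono)
    have "(\<Sum>m\<in>M. gamma b0 n M Y sel m * D m)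
          \<le> E m0 - sqdist n (\<lambda>p. of_bool (Y p)) Om - ln (alpha b0 n M m0)
            + ln (\<Sum>m\<in>M. alpha b0 n M m * (\<integral>x. exp (tilt n Y Om (Tmat (fst x) (snd x))) \<partial>Prior n m))"
      unfolding gamma_def E_def[symmetric]
      using fin m0 alpha_pos[OF fin M(1)] integral_exp_tilt_pos[OF m_pos Om]
        integral_half_sqdist_le_Energy[OF m_pos sel_in Om]
      by (intro Gibbs_mixture_bound) (auto simp: D_def E_def)
    moreover have "E m0 \<le> (\<integral>x. sqdist n (\<lambda>p. of_bool (Y p)) (Tmat (fst x) (snd x)) \<partial>Vmeas n m0 par0)
                           + KL_divergence (exp 1) (Prior n m0) (Vmeas n m0 par0)"
      using sel_min[OF m0 par0] by (simp add: E_def Energy_eq)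
    ultimately show "(\<Sum>m\<in>M. gamma b0 n M Y sel m * D m) \<le> ?bracket"
      by linarith
  qed (simp add: inv_nbar_nonneg)
  finally show ?thesis .
qed

lemma expectation_integral_exp_tilt_le_1:
  assumes m: "0 < m" and Om: "in_unit_cube n Om"
  shows "measure_pmf.expectation (Pdata n Om)
           (\<lambda>Y. \<integral>x. exp (tilt n Y Om (Tmat (fst x) (snd x))) \<partial>Prior n m) \<le> 1"
proof -
  interpret P: prob_space "Prior n m"
    by (rule prob_space_Prior)
  have "measure_pmf.expectation (Pdata n Om) (\<lambda>Y. \<integral>x. exp (tilt n Y Om (Tmat (fst x) (snd x))) \<partial>Prior n m)
        = (\<integral>x. measure_pmf.expectation (Pdata n Om) (\<lambda>Y. exp (tilt n Y Om (Tmat (fst x) (snd x)))) \<partial>Prior n m)"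
    using AE_Prior_abs_tilt_le[OF m Om]
    by (intro expectation_integral_swap finite_set_Pdata P.integrable_exp_AE_bounded) simp_all
  also have "\<dots> \<le> (\<integral>x. 1 \<partial>Prior n m)"
    by (intro integral_mono_AE' AE_I2 expectation_exp_tilt_le_1 Om) simp_all
  also have "\<dots> = 1"
    by (simp add: P.prob_space)
  finally show ?thesis .
qed

lemma expectation_integral_excess_loss:
  assumes m: "0 < m" and par: "par \<in> Vpar n m" and Om: "in_unit_cube n Om"
  shows "measure_pmf.expectation (Pdata n Om)
           (\<lambda>Y. (\<integral>x. sqdist n (\<lambda>p. of_bool (Y p)) (Tmat (fst x) (snd x)) \<partial>Vmeas n m par)
                - sqdist n (\<lambda>p. of_bool (Y p)) Om)
         = (\<integral>x. sqdist n (Tmat (fst x) (snd x)) Om \<partial>Vmeas n m par)"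
proof -
  interpret V: prob_space "Vmeas n m par"
    by (rule prob_space_Vmeas[OF par])
  have int_loss: "integrable (Vmeas n m par) (\<lambda>x. sqdist n (\<lambda>p. of_bool (Y p)) (Tmat (fst x) (snd x)))"
    for Y
    using integrable_Vmeas_sqdist[OF m par in_unit_cube_obs] by (simp add: sqdist_commute)
  then have "(\<integral>x. sqdist n (\<lambda>p. of_bool (Y p)) (Tmat (fst x) (snd x)) \<partial>Vmeas n m par)
             - sqdist n (\<lambda>p. of_bool (Y p)) Om
             = (\<integral>x. sqdist n (\<lambda>p. of_bool (Y p)) (Tmat (fst x) (snd x))
                   - sqdist n (\<lambda>p. of_bool (Y p)) Om \<partial>Vmeas n m par)" for Y
    by (simp add: V.prob_space)
  then have "measure_pmf.expectation (Pdata n Om)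
               (\<lambda>Y. (\<integral>x. sqdist n (\<lambda>p. of_bool (Y p)) (Tmat (fst x) (snd x)) \<partial>Vmeas n m par)
                    - sqdist n (\<lambda>p. of_bool (Y p)) Om)
             = measure_pmf.expectation (Pdata n Om)
               (\<lambda>Y. \<integral>x. sqdist n (\<lambda>p. of_bool (Y p)) (Tmat (fst x) (snd x))
                        - sqdist n (\<lambda>p. of_bool (Y p)) Om \<partial>Vmeas n m par)"
    by (simp only:)
  also have "\<dots> = (\<integral>x. measure_pmf.expectation (Pdata n Om)
                       (\<lambda>Y. sqdist n (\<lambda>p. of_bool (Y p)) (Tmat (fst x) (snd x))
                            - sqdist n (\<lambda>p. of_bool (Y p)) Om) \<partial>Vmeas n m par)"
    using int_loss by (intro expectation_integral_swap finite_set_Pdata) auto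
  also have "\<dots> = (\<integral>x. sqdist n (Tmat (fst x) (snd x)) Om \<partial>Vmeas n m par)"
    by (simp only: expectation_excess_loss[OF Om])
  finally show ?thesis .
qed

lemma expectation_ln_prior_mixture_le_0:
  assumes M: "M \<noteq> {}" "M \<subseteq> {1..n}" and Om: "in_unit_cube n Om"
  shows "measure_pmf.expectation (Pdata n Om) (\<lambda>Y. ln (\<Sum>m\<in>M. alpha b0 n M m
           * (\<integral>x. exp (tilt n Y Om (Tmat (fst x) (snd x))) \<partial>Prior n m))) \<le> 0"
proof -
  have fin: "finite M"
    using M(2) by (rule finite_subset) simp
  have m_pos: "0 < m" if "m \<in> M" for m
    using M(2) that by auto
  show ?thesis
    using fin finite_set_Pdata alpha_pos[OF fin M(1)] sum_alpha[OF fin M(1)]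
      integral_exp_tilt_pos[OF m_pos Om] expectation_integral_exp_tilt_le_1[OF m_pos Om]
    by (intro expectation_ln_mixture_le_0) (auto intro: less_imp_le)
qed

lemma expected_post_prob_dist2_ge_le:
  assumes M: "M \<noteq> {}" "M \<subseteq> {1..n}"
    and sel_in: "\<And>m Y. m \<in> M \<Longrightarrow> sel Y m \<in> Vpar n m"
    and sel_min: "\<And>m par Y. m \<in> M \<Longrightarrow> par \<in> Vpar n m \<Longrightarrow>
                   Energy n m Y (Vmeas n m (sel Y m)) \<le> Energy n m Y (Vmeas n m par)"
    and Om: "in_unit_cube n Om" and m0: "m0 \<in> M" and par0: "par0 \<in> Vpar n m0" and c: "0 < c"
  shows "measure_pmf.expectation (Pdata n Om)
           (\<lambda>Y. post_prob b0 n M Y (sel Y) (\<lambda>u z. c \<le> dist2 n (Tmat u z) Om))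
         \<le> 2 * inv_nbar n / c^2 *
            ((\<integral>x. sqdist n (Tmat (fst x) (snd x)) Om \<partial>Vmeas n m0 par0)
             + KL_divergence (exp 1) (Prior n m0) (Vmeas n m0 par0) - ln (alpha b0 n M m0))"
proof -
  have m0_pos: "0 < m0"
    using M(2) m0 by auto
  define R where "R Y = (\<integral>x. sqdist n (\<lambda>p. of_bool (Y p)) (Tmat (fst x) (snd x)) \<partial>Vmeas n m0 par0)
                         - sqdist n (\<lambda>p. of_bool (Y p)) Om" for Y
  define Z where "Z Y = (\<Sum>m\<in>M. alpha b0 n M m * (\<integral>x. exp (tilt n Y Om (Tmat (fst x) (snd x))) \<partial>Prior n m))"
    for Y
  define K where "K = KL_divergence (exp 1) (Prior n m0) (Vmeas n m0 par0) - ln (alpha b0 n M m0)"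
  have "post_prob b0 n M Y (sel Y) (\<lambda>u z. c \<le> dist2 n (Tmat u z) Om)
        \<le> 2 * inv_nbar n / c^2 * (R Y + KL_divergence (exp 1) (Prior n m0) (Vmeas n m0 par0)
                                  - ln (alpha b0 n M m0) + ln (Z Y))" for Y
    unfolding R_def Z_def using sel_in sel_min
    by (intro post_prob_dist2_ge_le[OF M _ _ Om m0 par0 c]) auto
  then have "measure_pmf.expectation (Pdata n Om)
               (\<lambda>Y. post_prob b0 n M Y (sel Y) (\<lambda>u z. c \<le> dist2 n (Tmat u z) Om))
             \<le> measure_pmf.expectation (Pdata n Om) (\<lambda>Y. 2 * inv_nbar n / c^2 * (R Y + K + ln (Z Y)))"
    by (intro integral_mono) (auto simp: K_def algebra_simps)
  also have "\<dots> = 2 * inv_nbar n / c^2 * (measure_pmf.expectation (Pdata n Om) R + K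
                    + measure_pmf.expectation (Pdata n Om) (\<lambda>Y. ln (Z Y)))"
    by (simp add: measure_pmf.prob_space)
  also have "\<dots> \<le> 2 * inv_nbar n / c^2 * ((\<integral>x. sqdist n (Tmat (fst x) (snd x)) Om \<partial>Vmeas n m0 par0) + K)"
    using expectation_integral_excess_loss[OF m0_pos par0 Om]
      expectation_ln_prior_mixture_le_0[OF M Om, of b0]
    by (intro mult_left_mono) (simp_all add: R_def[abs_def] Z_def inv_nbar_nonneg)
  finally show ?thesis
    by (simp add: K_def algebra_simps)
qed

lemma oracle_term_box_witness_le:
  assumes b0: "0 \<le> b0" and n: "2 \<le> n" and M: "M \<subseteq> {1..n}" and m0: "m0 \<in> M"
    and th: "(u0, z0) \<in> Theta n m0"
  shows "(\<integral>x. sqdist n (Tmat (fst x) (snd x)) Om \<partial>Vmeas n m0 (box_witness n u0 z0))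
           + KL_divergence (exp 1) (Prior n m0) (Vmeas n m0 (box_witness n u0 z0)) - ln (alpha b0 n M m0)
         \<le> 2 * sqdist n (Tmat u0 z0) Om + (6 + b0) * complexity n m0"
proof -
  have m0_pos: "1 \<le> m0"
    using m0 M by auto
  have ln_n: "1 / 2 \<le> ln (real n)" "ln (real n) \<le> complexity n m0"
    using ln_ge_half[OF n] ln_le_complexity[OF n m0_pos] by auto
  have "real (card (Lset n)) * (1 / real n)^2 \<le> 1"
    using card_Lset_le[of n] n by (simp add: field_simps flip: of_nat_power)
  then have witness: "(\<integral>x. sqdist n (Tmat (fst x) (snd x)) Om \<partial>Vmeas n m0 (box_witness n u0 z0))
                      \<le> 2 * sqdist n (Tmat u0 z0) Om + 4 * complexity n m0"
    using integral_sqdist_box_witness[OF n _ th, of Om] m0_pos ln_n by simp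
  have "real (card (Iset m0)) * ln (real n) \<le> real m0 ^ 2 * ln (real n)"
    using card_Iset_le[of m0] ln_n by (intro mult_right_mono) (auto simp flip: of_nat_power)
  then have "KL_divergence (exp 1) (Prior n m0) (Vmeas n m0 (box_witness n u0 z0)) \<le> complexity n m0"
    using KL_box_witness[OF n _ th] m0_pos by (simp add: complexity_def)
  moreover have "- ln (alpha b0 n M m0) \<le> b0 * complexity n m0 + complexity n m0"
    using neg_ln_alpha_le[OF b0 n M m0] ln_n by simp
  ultimately show ?thesis
    using witness by (simp add: algebra_simps)
qed

lemma rate_constant_le:
  fixes b0 d r e :: real
  assumes b0: "0 \<le> b0" and d: "0 \<le> d" and r: "0 \<le> r" and dr: "d + r \<le> 2 * e"
  shows "4 * d^2 + 8 * (6 + b0) * r^2 \<le> (192 + 32 * b0) * e^2"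
proof -
  have "4 * d^2 + 8 * (6 + b0) * r^2 = (48 + 8 * b0) * (d^2 + r^2) - (44 + 8 * b0) * d^2"
    by (simp add: algebra_simps)
  also have "\<dots> \<le> (48 + 8 * b0) * (d^2 + r^2)"
    using b0 by simp
  also have "\<dots> \<le> (48 + 8 * b0) * (d + r)^2"
    using b0 d r by (intro mult_left_mono) (simp_all add: power2_sum)
  also have "\<dots> \<le> (48 + 8 * b0) * (2 * e)^2"
    using b0 d r dr by (intro mult_left_mono power_mono) auto
  also have "\<dots> = (192 + 32 * b0) * e^2"
    by (simp add: power2_eq_square algebra_simps)
  finally show ?thesis .
qed

lemma expected_post_prob_eps_rate_le:
  fixes b0 A :: real
  assumes b0: "0 \<le> b0" and n: "2 \<le> n" and M: "M \<noteq> {}" "M \<subseteq> {1..n}"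
    and L: "\<And>Om. Om \<in> L \<Longrightarrow> in_unit_cube n Om"
    and sel_in: "\<And>m Y. m \<in> M \<Longrightarrow> sel Y m \<in> Vpar n m"
    and sel_min: "\<And>m par Y. m \<in> M \<Longrightarrow> par \<in> Vpar n m \<Longrightarrow>
                   Energy n m Y (Vmeas n m (sel Y m)) \<le> Energy n m Y (Vmeas n m par)"
    and Om: "Om \<in> L" and A: "0 < A"
  shows "measure_pmf.expectation (Pdata n Om)
           (\<lambda>Y. post_prob b0 n M Y (sel Y) (\<lambda>u z. A * eps_rate n L M \<le> dist2 n (Tmat u z) Om))
         \<le> (192 + 32 * b0) / A^2"
proof -
  obtain m0 u0 z0 where m0: "m0 \<in> M" and th: "(u0, z0) \<in> Theta n m0"
    and near: "dist2 n (Tmat u0 z0) Om + rate_penalty n m0 \<le> 2 * eps_rate n L M"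
    and eps_pos: "0 < eps_rate n L M"
    using eps_rate_witness[OF n M L Om] by blast
  define e where "e = eps_rate n L M"
  define d where "d = dist2 n (Tmat u0 z0) Om"
  have m0_pos: "1 \<le> m0"
    using m0 M by auto
  have c_pos: "0 < A * e"
    using A eps_pos by (simp add: e_def)
  have "measure_pmf.expectation (Pdata n Om)
          (\<lambda>Y. post_prob b0 n M Y (sel Y) (\<lambda>u z. A * e \<le> dist2 n (Tmat u z) Om))
        \<le> 2 * inv_nbar n / (A * e)^2 *
           ((\<integral>x. sqdist n (Tmat (fst x) (snd x)) Om \<partial>Vmeas n m0 (box_witness n u0 z0))
            + KL_divergence (exp 1) (Prior n m0) (Vmeas n m0 (box_witness n u0 z0)) - ln (alpha b0 n M m0))"
    using m0_pos by (intro expected_post_prob_dist2_ge_le[OF M sel_in sel_min L[OF Om] m0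
                           box_witness_in_Vpar[OF n th] c_pos]) auto
  also have "\<dots> \<le> 2 * inv_nbar n / (A * e)^2 * (2 * sqdist n (Tmat u0 z0) Om + (6 + b0) * complexity n m0)"
    by (intro mult_left_mono oracle_term_box_witness_le[OF b0 n M(2) m0 th]) (simp add: inv_nbar_nonneg)
  also have "\<dots> = (4 * d^2 + 2 * (6 + b0) * (inv_nbar n * complexity n m0)) / (A * e)^2"
    by (simp add: d_def dist2_sq add_divide_distrib algebra_simps)
  also have "\<dots> \<le> (4 * d^2 + 8 * (6 + b0) * rate_penalty n m0 ^ 2) / (A * e)^2"
  proof (intro divide_right_mono add_left_mono)
    have "2 * (6 + b0) * (inv_nbar n * complexity n m0) \<le> 2 * (6 + b0) * (4 * rate_penalty n m0 ^ 2)"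
      using inv_nbar_complexity_le[OF n m0_pos] b0 by (intro mult_left_mono) auto
    also have "\<dots> = 8 * (6 + b0) * rate_penalty n m0 ^ 2"
      by simp
    finally show "2 * (6 + b0) * (inv_nbar n * complexity n m0) \<le> 8 * (6 + b0) * rate_penalty n m0 ^ 2" .
  qed simp
  also have "\<dots> \<le> (192 + 32 * b0) * e^2 / (A * e)^2"
    using b0 near rate_penalty_pos[OF n m0_pos]
    by (intro divide_right_mono rate_constant_le) (auto simp: d_def e_def dist2_nonneg)
  also have "\<dots> = (192 + 32 * b0) / A^2"
    using eps_pos by (simp add: e_def power_mult_distrib)
  finally show ?thesis
    by (simp add: e_def)
qed

lemma eventually_const_div_sq_le:
  fixes A :: "nat \<Rightarrow> real"
  assumes A: "filterlim A at_top sequentially" and e: "0 < e" and K: "0 \<le> K"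
  shows "\<forall>\<^sub>F n in sequentially. 0 < A n \<and> K / (A n)^2 \<le> e"
proof -
  have "\<forall>\<^sub>F n in sequentially. sqrt (K / e) + 1 \<le> A n"
    using A by (simp add: filterlim_at_top)
  then show ?thesis
  proof (rule eventually_mono)
    fix n assume An: "sqrt (K / e) + 1 \<le> A n"
    have sqrt_nonneg: "0 \<le> sqrt (K / e)"
      using K e by simp
    then have A_pos: "0 < A n"
      using An by linarith
    have "K / e = (sqrt (K / e))^2"
      using K e by simp
    also have "\<dots> \<le> (A n)^2"
      using An sqrt_nonneg by (intro power_mono) auto
    finally show "0 < A n \<and> K / (A n)^2 \<le> e"
      using A_pos e by (simp add: divide_le_eq mult.commute)
  qed
qed

theorem theorem7p4:
  fixes b0 :: real
    and Lam :: "nat \<Rightarrow> (nat \<times> nat \<Rightarrow> real) set"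
    and M :: "nat \<Rightarrow> nat set"
    and A :: "nat \<Rightarrow> real"
    and sel :: "nat \<Rightarrow> nat \<Rightarrow> (nat \<times> nat \<Rightarrow> bool) \<Rightarrow>
                (nat \<times> nat \<Rightarrow> real) \<times> (nat \<times> nat \<Rightarrow> real) \<times> (nat \<Rightarrow> nat pmf)"
  assumes b0: "b0 > 0"
    and Lam: "\<And>n Om p. 2 \<le> n \<Longrightarrow> Om \<in> Lam n \<Longrightarrow> p \<in> Lset n \<Longrightarrow> 0 \<le> Om p \<and> Om p \<le> 1"
    and M: "\<And>n. 2 \<le> n \<Longrightarrow> M n \<noteq> {} \<and> M n \<subseteq> {1..n}"
    and sel_in: "\<And>n m Y. 2 \<le> n \<Longrightarrow> m \<in> M n \<Longrightarrow> sel n m Y \<in> Vpar n m"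
    and sel_min: "\<And>n m Y par. 2 \<le> n \<Longrightarrow> m \<in> M n \<Longrightarrow> par \<in> Vpar n m \<Longrightarrow>
                    Energy n m Y (Vmeas n m (sel n m Y)) \<le> Energy n m Y (Vmeas n m par)"
    and A: "filterlim A at_top sequentially"
  shows "\<forall>e>0. \<forall>\<^sub>F n in sequentially. \<forall>Om\<in>Lam n.
           measure_pmf.expectation (Pdata n Om)
             (\<lambda>Y. post_prob b0 n (M n) Y (\<lambda>m. sel n m Y)
                    (\<lambda>u z. dist2 n (Tmat u z) Om \<ge> A n * eps_rate n (Lam n) (M n))) \<le> e"
proof (intro allI impI)
  fix e :: real
  assume "0 < e"
  with A b0 have "\<forall>\<^sub>F n in sequentially. 0 < A n \<and> (192 + 32 * b0) / (A n)^2 \<le> e"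
    by (intro eventually_const_div_sq_le) auto
  with eventually_ge_at_top[of 2]
  show "\<forall>\<^sub>F n in sequentially. \<forall>Om\<in>Lam n.
          measure_pmf.expectation (Pdata n Om)
            (\<lambda>Y. post_prob b0 n (M n) Y (\<lambda>m. sel n m Y)
                   (\<lambda>u z. dist2 n (Tmat u z) Om \<ge> A n * eps_rate n (Lam n) (M n))) \<le> e"
  proof eventually_elim
    case (elim n)
    have M_n: "M n \<noteq> {}" "M n \<subseteq> {1..n}"
      using M[OF elim(1)] by auto
    have Lam_n: "\<And>Om. Om \<in> Lam n \<Longrightarrow> in_unit_cube n Om"
      using Lam[OF elim(1)] by (auto simp: in_unit_cube_def)
    show ?case
      using expected_post_prob_eps_rate_le[where sel="\<lambda>Y m. sel n m Y", OF less_imp_le[OF b0]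
              elim(1) M_n Lam_n sel_in[OF elim(1)] sel_min[OF elim(1)] _ conjunct1[OF elim(2)]]
        conjunct2[OF elim(2)]
      by (blast intro: order.trans)
  qed
qed

end
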